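(* Under the standing assumptions below, if $u\in\overline{\mathcal P_1}$ then $u$ does not belong to any periodic orbit, and no trajectory $(z(t))_{t\ge0}$ with $z(0)=u$ is eventually periodic.
   Context: Fix $\rho_1,\rho_2,\rho_3\in(0,1)$ with $\rho_1+\rho_2+\rho_3>1$ and $\rho_i+\rho_j\le1$ for all $i\ne j$; $\mu_i=1$, $\theta:=\rho_1+\rho_2+\rho_3-1$. $A_i^0:=\{y\in\mathbb R^3: y_1+y_2+y_3=1, y_i=0, y_l\ge0\}$, $A^0:=\bigcup_iA_i^0$; for $z\in A^0\setminus A_j^0$, $f_j(z):=\sum_{i\neq j}\frac{(1-\rho_j)z_i+\rho_i z_j}{(1-\rho_j)+\theta z_j}e_i$. For $(\hat i,\hat j,\hat k)$ equal to $(1,2,3)$ or a cyclic permutation, $(1-x)e_{\hat j}+xe_{\hat k}\in A^0_{\hat i}$ is written $(x,\hat i)$, $\mathrm{Side}((x,\hat i)):=\hat i$. Decision points $d_1,d_2,d_3\in(0,1)$ (identified with $(d_{\hat i},\hat i)$); switching rule $\mathfrak R((x,\hat i))=\hat j$ if $x<d_{\hat i}$, $\hat k$ if $x>d_{\hat i}$, both allowed if $x=d_{\hat i}$; $\varphi(z):=f_{\mathfrak R(z)}(z)$. A trajectory is $(z(t))$ with $z(t+1)\in\varphi(z(t))$; it is eventually periodic if for some $m\ge1$ and $N$, $\mathrm{Side}(z(n+m))=\mathrm{Side}(z(n))$ for all $n\ge N$. A periodic orbit is $u_1,\dots,u_m$ with $u_{n+1}\in\varphi(u_n)$, $u_1\in\varphi(u_m)$.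 $z$ is a pre-image of $z'$ if some trajectory from $z$ has $z(t)=z'$ for some $t\ge1$. Standing assumption: $d_1$ has infinitely many distinct pre-images, while $d_2$ and $d_3$ have only finitely many. $\mathcal P_1$ is the set consisting of $d_1$ and all its pre-images, $\overline{\mathcal P_1}$ its closure. *)

theory Defs
  imports "HOL-Analysis.Analysis"
begin

text \<open>Points of R^3 are vectors of type real^3. The coordinate indices 1,2,3 are the
  three elements of the index type 3 (where 3 = 0); the cyclic permutations
  (1,2,3),(2,3,1),(3,1,2) are exactly the triples (i, i+1, i+2).\<close>

definition theta :: "(3 \<Rightarrow> real) \<Rightarrow> real" where
  "theta \<rho> = \<rho> 1 + \<rho> 2 + \<rho> 3 - 1"

definition A0side :: "3 \<Rightarrow> (real^3) set" where
  "A0side i = {y. y$1 + y$2 + y$3 = 1 \<and> y$i = 0 \<and> (\<forall>l. y$l \<ge> 0)}"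

definition A0 :: "(real^3) set" where
  "A0 = (\<Union>i. A0side i)"

text \<open>f_j, meaningful for z in A0 - A0side j.\<close>
definition fmap :: "(3 \<Rightarrow> real) \<Rightarrow> 3 \<Rightarrow> real^3 \<Rightarrow> real^3" where
  "fmap \<rho> j z = (\<Sum>i\<in>UNIV - {j}.
      (((1 - \<rho> j) * z$i + \<rho> i * z$j) / ((1 - \<rho> j) + theta \<rho> * z$j)) *\<^sub>R axis i 1)"

definition spt :: "real \<Rightarrow> 3 \<Rightarrow> real^3" where
  "spt x i = (1 - x) *\<^sub>R axis (i + 1) 1 + x *\<^sub>R axis (i + 2) 1"

definition Rule :: "(3 \<Rightarrow> real) \<Rightarrow> real^3 \<Rightarrow> 3 set" where
  "Rule d z = {j. \<exists>x i. 0 \<le> x \<and> x \<le> 1 \<and> z = spt x i \<and>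
      ((x < d i \<and> j = i + 1) \<or> (x > d i \<and> j = i + 2) \<or> (x = d i \<and> (j = i + 1 \<or> j = i + 2)))}"

definition phi :: "(3 \<Rightarrow> real) \<Rightarrow> (3 \<Rightarrow> real) \<Rightarrow> real^3 \<Rightarrow> (real^3) set" where
  "phi \<rho> d z = {fmap \<rho> j z | j. j \<in> Rule d z}"

definition trajectory :: "(3 \<Rightarrow> real) \<Rightarrow> (3 \<Rightarrow> real) \<Rightarrow> (nat \<Rightarrow> real^3) \<Rightarrow> bool" where
  "trajectory \<rho> d z \<longleftrightarrow> (\<forall>t. z (Suc t) \<in> phi \<rho> d (z t))"

text \<open>Side of a point: the set of sides containing it (a singleton except at vertices).\<close>
definition Sides :: "real^3 \<Rightarrow> 3 set" where
  "Sides z = {i. z \<in> A0side i}"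

definition eventually_periodic :: "(nat \<Rightarrow> real^3) \<Rightarrow> bool" where
  "eventually_periodic z \<longleftrightarrow>
     (\<exists>m N. m \<ge> 1 \<and> (\<forall>n\<ge>N. Sides (z (n + m)) = Sides (z n)))"

definition periodic_orbit :: "(3 \<Rightarrow> real) \<Rightarrow> (3 \<Rightarrow> real) \<Rightarrow> nat \<Rightarrow> (nat \<Rightarrow> real^3) \<Rightarrow> bool" where
  "periodic_orbit \<rho> d m u \<longleftrightarrow> m \<ge> 1 \<and> (\<forall>n<m. u ((n + 1) mod m) \<in> phi \<rho> d (u n))"

definition in_periodic_orbit :: "(3 \<Rightarrow> real) \<Rightarrow> (3 \<Rightarrow> real) \<Rightarrow> real^3 \<Rightarrow> bool" where
  "in_periodic_orbit \<rho> d v \<longleftrightarrow> (\<exists>m u k. periodic_orbit \<rho> d m u \<and> k < m \<and> u k = v)"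

definition preimages :: "(3 \<Rightarrow> real) \<Rightarrow> (3 \<Rightarrow> real) \<Rightarrow> real^3 \<Rightarrow> (real^3) set" where
  "preimages \<rho> d w = {v. \<exists>z t. trajectory \<rho> d z \<and> z 0 = v \<and> t \<ge> 1 \<and> z t = w}"

definition P1 :: "(3 \<Rightarrow> real) \<Rightarrow> (3 \<Rightarrow> real) \<Rightarrow> (real^3) set" where
  "P1 \<rho> d = insert (spt (d 1) 1) (preimages \<rho> d (spt (d 1) 1))"

end

theory Submission
  imports Defs
begin

(* Write a boundary point as (i, x), the point of side i with coordinate x.  Away from the
   vertices the dynamics is a one-dimensional map that is injective, reverses orientation on
   each branch and contracts uniformly.  As d_1 has infinitely many preimages, they form a
   single injective backward chain w, and every point s of its closure has all its finite
   backward itineraries occurring along w.  Two points with equal long itineraries (other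
   than the itinerary of d_1) step to the same side: otherwise d_i separates them and gets the
   same itinerary, and its backward path, which meets a decision point because d_2 and d_3
   have only finitely many preimages, would be straddled by the two backward paths there
   although both continue to the same side.  Hence the orbit of s shadows w backwards and
   returns to the itinerary of d_1 infinitely often, so eventually periodic sides would make
   the sides of w periodic and, by contraction, w itself periodic, contradicting injectivity. *)

section \<open>Index arithmetic, linear fractional maps and shifted sequences\<close>

lemma exhaust_3_disj: "(i::3) = 1 \<or> i = 2 \<or> i = 3"
  using exhaust_3[of i] by auto

lemma cyclic_3_neq [simp]:
  "(i::3) + 1 \<noteq> i + 2" "(i::3) + 2 \<noteq> i + 1"
  "(i::3) \<noteq> i + 1" "(i::3) + 1 \<noteq> i" "(i::3) \<noteq> i + 2" "(i::3) + 2 \<noteq> i"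
  using exhaust_3_disj[of i] by auto

lemma cyclic_3_cases: "(l::3) = i \<or> l = i + 1 \<or> l = i + 2"
  using exhaust_3_disj[of i] exhaust_3_disj[of l] by fastforce

lemma numeral_3_wrap [simp]: "(4::3) = 1" "(5::3) = 2" "(i::3) + 3 = i"
  by simp_all

lemma cyclic_3_shift_iff: "(k::3) = i + 1 \<longleftrightarrow> i = k + 2" "(k::3) = i + 2 \<longleftrightarrow> i = k + 1"
  by auto

definition linfrac :: "real \<Rightarrow> real \<Rightarrow> real \<Rightarrow> real \<Rightarrow> real" where
  "linfrac a c b t = a * t / (c + b * t)"

lemma linfrac_diff:
  assumes "c + b * t \<noteq> 0" "c + b * t' \<noteq> 0"
  shows "linfrac a c b t - linfrac a c b t' = a * c * (t - t') / ((c + b * t) * (c + b * t'))"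
  using assms unfolding linfrac_def by (simp add: field_simps)

lemma linfrac_strict_mono:
  assumes "0 < a" "0 < c" "0 \<le> b" "0 \<le> t" "t < t'"
  shows "linfrac a c b t < linfrac a c b t'"
proof -
  have "0 < c + b * t" "0 < c + b * t'"
    using assms by (simp_all add: add_pos_nonneg)
  moreover have "a * c * (t - t') < 0"
    using assms by (simp add: mult_pos_neg)
  ultimately have "a * c * (t - t') / ((c + b * t) * (c + b * t')) < 0"
    by (simp add: divide_neg_pos)
  then show ?thesis
    using linfrac_diff[of c b t t' a] \<open>0 < c + b * t\<close> \<open>0 < c + b * t'\<close> by simp
qed

lemma linfrac_lipschitz:
  assumes "0 \<le> a" "a \<le> c" "c \<le> 1" "0 < c" "0 < b" "0 \<le> \<delta>" "\<delta> \<le> t" "0 \<le> t'"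
  shows "\<bar>linfrac a c b t - linfrac a c b t'\<bar> \<le> \<bar>t - t'\<bar> / (1 + b * \<delta>)"
proof -
  have b\<delta>: "0 \<le> b * \<delta>" "b * \<delta> \<le> b * t" and bt': "0 \<le> b * t'"
    using assms by (simp_all add: mult_left_mono)
  then have pos: "0 < c + b * t" "0 < c + b * t'"
    using assms by linarith+
  have "a \<le> c + b * t'" using assms bt' by linarith
  then have first: "a / (c + b * t') \<le> 1"
    using pos(2) by (simp add: pos_divide_le_eq)
  have "c * (1 + b * \<delta>) \<le> c + b * \<delta>"
    using assms b\<delta> by (simp add: distrib_left mult_left_le_one_le)
  also have "\<dots> \<le> c + b * t" using b\<delta> by simp
  finally have second: "c / (c + b * t) \<le> 1 / (1 + b * \<delta>)"
    using pos(1) b\<delta>(1) by (simp add: divide_simps)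
  have "\<bar>linfrac a c b t - linfrac a c b t'\<bar> = a / (c + b * t') * (c / (c + b * t)) * \<bar>t - t'\<bar>"
    using linfrac_diff[of c b t t' a] pos assms by (simp add: abs_mult abs_divide)
  also have "\<dots> \<le> 1 * (1 / (1 + b * \<delta>)) * \<bar>t - t'\<bar>"
    using first second assms pos by (intro mult_right_mono mult_mono) auto
  finally show ?thesis by simp
qed

lemma continuous_on_linfrac:
  assumes "0 < c" "0 \<le> b"
  shows "continuous_on {0..} (linfrac a c b)"
proof -
  have "0 < c + b * t" if "0 \<le> t" for t
    using assms that by (simp add: add_pos_nonneg)
  then have "\<forall>t\<in>{0..}. c + b * t \<noteq> 0"
    by (metis atLeast_iff less_irrefl)
  then show ?thesis unfolding linfrac_def by (intro continuous_intros) auto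
qed

lemma sgn_eq_imp_neg_iff: "sgn (a::real) = sgn b \<Longrightarrow> a < 0 \<longleftrightarrow> b < 0"
  by (auto simp: sgn_if split: if_splits)

lemma sgn_opposite_imp_neg_iff: "sgn (a::real) = - sgn b \<Longrightarrow> sgn a \<noteq> 0 \<Longrightarrow> a < 0 \<longleftrightarrow> \<not> b < 0"
  by (auto simp: sgn_if split: if_splits)

lemma bounded_shift_uniform:
  fixes f :: "nat \<Rightarrow> 'a"
  assumes "\<forall>B. \<exists>r\<in>{1..R}. \<forall>j\<le>B. f j = f (j + r)"
  shows "\<exists>r\<in>{1..R}. \<forall>j. f j = f (j + r)"
proof (rule ccontr)
  assume "\<not> ?thesis"
  then obtain g where g: "\<forall>r\<in>{1..R}. f (g r) \<noteq> f (g r + r)"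
    by (metis bchoice)
  obtain r where r: "r \<in> {1..R}" "\<forall>j\<le>(\<Sum>r\<in>{1..R}. g r). f j = f (j + r)"
    using assms by blast
  have "g r \<le> (\<Sum>r\<in>{1..R}. g r)"
    using r(1) by (intro member_le_sum) auto
  then show False
    using g r by blast
qed

lemma backward_determined_shift:
  assumes A: "finite A" "\<And>i. x i \<in> A" and F: "\<And>i. x i = F (x (Suc i))"
  shows "\<exists>r\<in>{1..card A}. \<forall>j\<le>B. x j = x (j + r)"
proof -
  have "\<not> inj_on x {B..B + card A}"
  proof
    assume "inj_on x {B..B + card A}"
    then have "card {B..B + card A} \<le> card A"
      using A by (intro card_inj_on_le) auto
    then show False by simp
  qed
  then obtain a b where ab: "B \<le> a" "a < b" "b \<le> B + card A" "x a = x b"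
    unfolding inj_on_def by (metis atLeastAtMost_iff linorder_neqE_nat)
  have "x (a - t) = x (b - t)" if "t \<le> a" for t
    using that
  proof (induction t)
    case (Suc t)
    then show ?case
      using F[of "a - Suc t"] F[of "b - Suc t"] ab(2) by (simp add: Suc_diff_Suc)
  qed (use ab in simp)
  moreover have "a - (a - j) = j" "b - (a - j) = j + (b - a)" if "j \<le> B" for j
    using that ab(1,2) by simp_all
  ultimately have "x j = x (j + (b - a))" if "j \<le> B" for j
    using that ab(1) by (metis diff_le_self)
  then show ?thesis
    using ab by (intro bexI[of _ "b - a"]) auto
qed

section \<open>The switching map on the boundary of the simplex\<close>

text \<open>A pair (i, x) stands for the point (x, i) = spt x i of side i, see pt below.\<close>

type_synonym side_point = "3 \<times> real"

abbreviation nonvertex :: "side_point \<Rightarrow> bool" where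
  "nonvertex s \<equiv> 0 < snd s \<and> snd s < 1"

locale switching_system =
  fixes \<rho> d :: "3 \<Rightarrow> real"
  assumes rho_range: "\<forall>i. 0 < \<rho> i \<and> \<rho> i < 1"
    and rho_sum: "\<rho> 1 + \<rho> 2 + \<rho> 3 > 1"
    and rho_pair: "\<forall>i j. i \<noteq> j \<longrightarrow> \<rho> i + \<rho> j \<le> 1"
    and d_range: "\<forall>i. 0 < d i \<and> d i < 1"
begin

abbreviation \<theta> :: real where "\<theta> \<equiv> theta \<rho>"

abbreviation dp :: "3 \<Rightarrow> side_point" where "dp i \<equiv> (i, d i)"

abbreviation at_decision :: "side_point \<Rightarrow> bool" where
  "at_decision s \<equiv> snd s = d (fst s)"

lemma theta_pos: "\<theta> > 0"
  using rho_sum by (simp add: theta_def)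

lemma rho_pos: "\<rho> i > 0" and rho_lt1: "\<rho> i < 1" and d_pos: "d i > 0" and d_lt1: "d i < 1"
  using rho_range d_range by auto

lemma theta_rotate: "\<theta> = \<rho> i + \<rho> (i + 1) + \<rho> (i + 2) - 1"
  using exhaust_3_disj[of i] by (auto simp: theta_def)

lemma rho_pair_next: "\<rho> i + \<rho> (i + 1) \<le> 1" and rho_pair_prev: "\<rho> i + \<rho> (i + 2) \<le> 1"
  using rho_pair cyclic_3_neq by metis+

text \<open>f_(i+1) maps (x, i) to (g_next i x, i + 1) and f_(i+2) maps it to (g_prev i x, i + 2),
  see fmap_spt_next and fmap_spt_prev.\<close>

definition g_next :: "3 \<Rightarrow> real \<Rightarrow> real" where
  "g_next i x = linfrac (\<rho> i) (1 - \<rho> (i + 1)) \<theta> (1 - x)"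

definition g_prev :: "3 \<Rightarrow> real \<Rightarrow> real" where
  "g_prev i x = 1 - linfrac (\<rho> i) (1 - \<rho> (i + 2)) \<theta> x"

lemma g_next_range:
  assumes "0 \<le> x" "x < 1"
  shows "0 < g_next i x \<and> g_next i x < 1"
proof -
  have den: "0 < 1 - \<rho> (i + 1) + \<theta> * (1 - x)"
    using theta_pos rho_lt1[of "i + 1"] assms by (simp add: add_pos_nonneg)
  have "1 - \<rho> (i + 1) + \<theta> * (1 - x) - \<rho> i * (1 - x) = (1 - \<rho> (i + 1)) * x + \<rho> (i + 2) * (1 - x)"
    by (simp add: theta_rotate[of i] algebra_simps)
  also have "\<dots> > 0"
    using assms rho_lt1[of "i + 1"] rho_pos[of "i + 2"] by (simp add: add_nonneg_pos)
  finally show ?thesis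
    using den rho_pos[of i] assms unfolding g_next_def linfrac_def by (simp add: divide_simps)
qed

lemma g_prev_range:
  assumes "0 < x" "x \<le> 1"
  shows "0 < g_prev i x \<and> g_prev i x < 1"
proof -
  have den: "0 < 1 - \<rho> (i + 2) + \<theta> * x"
    using theta_pos rho_lt1[of "i + 2"] assms by (simp add: add_pos_nonneg)
  have "1 - \<rho> (i + 2) + \<theta> * x - \<rho> i * x = (1 - \<rho> (i + 2)) * (1 - x) + \<rho> (i + 1) * x"
    by (simp add: theta_rotate[of i] algebra_simps)
  also have "\<dots> > 0"
    using assms rho_lt1[of "i + 2"] rho_pos[of "i + 1"] by (simp add: add_nonneg_pos)
  finally show ?thesis
    using den rho_pos[of i] assms unfolding g_prev_def linfrac_def by (simp add: divide_simps)
qed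

lemma g_next_strict_antimono: "0 \<le> x \<Longrightarrow> x < y \<Longrightarrow> y \<le> 1 \<Longrightarrow> g_next i y < g_next i x"
  unfolding g_next_def
  using rho_pos[of i] rho_lt1[of "i + 1"] theta_pos by (intro linfrac_strict_mono) auto

lemma g_prev_strict_antimono: "0 \<le> x \<Longrightarrow> x < y \<Longrightarrow> g_prev i y < g_prev i x"
  unfolding g_prev_def
  using rho_pos[of i] rho_lt1[of "i + 2"] theta_pos linfrac_strict_mono by simp

lemma g_next_antimono: "0 \<le> x \<Longrightarrow> x \<le> y \<Longrightarrow> y \<le> 1 \<Longrightarrow> g_next i y \<le> g_next i x"
  using g_next_strict_antimono[of x y i] by (cases "x = y") auto

lemma g_prev_antimono: "0 \<le> x \<Longrightarrow> x \<le> y \<Longrightarrow> g_prev i y \<le> g_prev i x"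
  using g_prev_strict_antimono[of x y i] by (cases "x = y") auto

lemma continuous_on_g_next: "continuous_on {0..1} (g_next i)"
proof -
  have "continuous_on {0..1} (linfrac (\<rho> i) (1 - \<rho> (i + 1)) \<theta> \<circ> (\<lambda>x. 1 - x))"
    using rho_lt1[of "i + 1"] theta_pos
    by (intro continuous_on_compose continuous_intros
        continuous_on_subset[OF continuous_on_linfrac]) auto
  then show ?thesis unfolding g_next_def comp_def .
qed

lemma continuous_on_g_prev: "continuous_on {0..1} (g_prev i)"
  unfolding g_prev_def using rho_lt1[of "i + 2"] theta_pos
  by (intro continuous_intros continuous_on_subset[OF continuous_on_linfrac]) auto

definition margin :: real where
  "margin = Min (range (\<lambda>i. min (d i) (1 - d i)))"

lemma margin_le: "margin \<le> d i" "margin \<le> 1 - d i"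
proof -
  have "margin \<le> min (d i) (1 - d i)"
    unfolding margin_def by (rule Min_le) auto
  then show "margin \<le> d i" "margin \<le> 1 - d i" by simp_all
qed

lemma margin_pos: "0 < margin"
  unfolding margin_def using d_pos d_lt1 by (simp add: Min_gr_iff)

definition lip :: real where
  "lip = 1 / (1 + \<theta> * margin)"

lemma lip_pos: "0 < lip" and lip_lt1: "lip < 1"
  using theta_pos margin_pos unfolding lip_def by (simp_all add: add_pos_pos)

lemma g_next_lipschitz: "x \<le> d i \<Longrightarrow> y \<le> 1 \<Longrightarrow> \<bar>g_next i x - g_next i y\<bar> \<le> lip * \<bar>x - y\<bar>"
  using linfrac_lipschitz[of "\<rho> i" "1 - \<rho> (i + 1)" \<theta> margin "1 - x" "1 - y"]
    rho_pos[of i] rho_pos[of "i + 1"] rho_lt1[of "i + 1"] rho_pair_next[of i] theta_pos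
    margin_pos margin_le[of i]
  unfolding g_next_def lip_def by (simp add: abs_minus_commute)

lemma g_prev_lipschitz: "d i \<le> x \<Longrightarrow> 0 \<le> y \<Longrightarrow> \<bar>g_prev i x - g_prev i y\<bar> \<le> lip * \<bar>x - y\<bar>"
  using linfrac_lipschitz[of "\<rho> i" "1 - \<rho> (i + 2)" \<theta> margin x y]
    rho_pos[of i] rho_pos[of "i + 2"] rho_lt1[of "i + 2"] rho_pair_prev[of i] theta_pos
    margin_pos margin_le[of i]
  unfolding g_prev_def lip_def by (simp add: abs_minus_commute)

definition vertex_image :: "3 \<Rightarrow> real" where
  "vertex_image k = g_next (k + 2) 0"

lemma g_prev_one: "g_prev (k + 1) 1 = vertex_image k"
proof -
  have "1 - \<rho> k + \<theta> = \<rho> (k + 1) + \<rho> (k + 2)"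
    using theta_rotate[of k] by simp
  moreover have "\<rho> (k + 1) + \<rho> (k + 2) > 0"
    using rho_pos[of "k + 1"] rho_pos[of "k + 2"] by simp
  ultimately show ?thesis
    unfolding vertex_image_def g_next_def g_prev_def linfrac_def by (simp add: field_simps)
qed

definition allowed :: "3 \<Rightarrow> 3 \<Rightarrow> real \<Rightarrow> bool" where
  "allowed i j x \<longleftrightarrow> (j = i + 1 \<and> x \<le> d i) \<or> (j = i + 2 \<and> d i \<le> x)"

definition branch :: "3 \<Rightarrow> 3 \<Rightarrow> real \<Rightarrow> real" where
  "branch i j = (if j = i + 1 then g_next i else g_prev i)"

fun step :: "side_point \<Rightarrow> side_point \<Rightarrow> bool" where
  "step (i, x) (j, y) \<longleftrightarrow> 0 \<le> x \<and> x \<le> 1 \<and> allowed i j x \<and> y = branch i j x"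

declare step.simps [simp del]

lemma step_iff: "step (i, x) (j, y) \<longleftrightarrow> 0 \<le> x \<and> x \<le> 1 \<and>
    (j = i + 1 \<and> x \<le> d i \<and> y = g_next i x \<or> j = i + 2 \<and> d i \<le> x \<and> y = g_prev i x)"
  by (auto simp: step.simps allowed_def branch_def)

lemma step_into_iff: "step (i, x) (k, y) \<longleftrightarrow> 0 \<le> x \<and> x \<le> 1 \<and>
    (i = k + 2 \<and> x \<le> d i \<and> y = g_next i x \<or> i = k + 1 \<and> d i \<le> x \<and> y = g_prev i x)"
  unfolding step_iff cyclic_3_shift_iff(1)[of k i] cyclic_3_shift_iff(2)[of k i] ..

lemma step_source_range: "step a b \<Longrightarrow> 0 \<le> snd a \<and> snd a \<le> 1"
  by (cases a; cases b) (simp add: step_iff)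

lemma step_target_nonvertex: "step a b \<Longrightarrow> nonvertex b"
  using g_next_range[of _ "fst a"] g_prev_range[of _ "fst a"] d_pos[of "fst a"] d_lt1[of "fst a"]
  by (cases a; cases b) (fastforce simp: step_iff)

lemma step_side:
  "step a b \<Longrightarrow> (fst b = fst a + 1 \<and> snd a \<le> d (fst a)) \<or> (fst b = fst a + 2 \<and> d (fst a) \<le> snd a)"
  by (cases a; cases b) (auto simp: step_iff)

lemma step_successor_side:
  "step a b \<Longrightarrow> \<not> at_decision a \<Longrightarrow> fst b = (if snd a < d (fst a) then fst a + 1 else fst a + 2)"
  using step_side[of a b] by auto

lemma step_exists:
  assumes "0 \<le> snd a" "snd a \<le> 1"
  shows "\<exists>b. step a b"
proof (cases "snd a \<le> d (fst a)")
  case True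
  then have "step a (fst a + 1, g_next (fst a) (snd a))"
    using assms by (cases a) (simp add: step_iff)
  then show ?thesis ..
next
  case False
  then have "step a (fst a + 2, g_prev (fst a) (snd a))"
    using assms by (cases a) (simp add: step_iff)
  then show ?thesis ..
qed

lemma step_unique: "step a b \<Longrightarrow> step a b' \<Longrightarrow> fst b = fst b' \<Longrightarrow> b = b'"
  by (cases a; cases b; cases b') (auto simp: step_iff)

lemma step_two_successors: "step a b \<Longrightarrow> step a b' \<Longrightarrow> b \<noteq> b' \<Longrightarrow> at_decision a"
  by (cases a; cases b; cases b') (auto simp: step_iff)

lemma step_antitone: "step (i, x) (j, y) \<Longrightarrow> step (i, x') (j, y') \<Longrightarrow> x < x' \<Longrightarrow> y' < y"
  using g_next_strict_antimono[of x x' i] g_prev_strict_antimono[of x x' i]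
  by (auto simp: step_iff)

lemma step_lipschitz:
  "step (i, x) (j, y) \<Longrightarrow> step (i, x') (j, y') \<Longrightarrow> \<bar>y - y'\<bar> \<le> lip * \<bar>x - x'\<bar>"
  using g_next_lipschitz[of x i x'] g_prev_lipschitz[of i x x']
  by (auto simp: step_iff)

text \<open>Steps into side k from side k+2 land below the common image of the vertex e_k, steps
  from side k+1 above it, which makes the map injective away from the vertices.\<close>

lemma step_from_prev_side:
  assumes "step (k + 2, x) (k, y)"
  shows "y \<le> vertex_image k" and "y = vertex_image k \<longleftrightarrow> x = 0"
proof -
  have x: "0 \<le> x" "x \<le> 1" and y: "y = g_next (k + 2) x"
    using assms by (auto simp: step_into_iff)
  show "y \<le> vertex_image k"
    using g_next_antimono[of 0 x "k + 2"] x y unfolding vertex_image_def by simp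
  show "y = vertex_image k \<longleftrightarrow> x = 0"
    using g_next_strict_antimono[of 0 x "k + 2"] x y unfolding vertex_image_def by (cases "x = 0") auto
qed

lemma step_from_next_side:
  assumes "step (k + 1, x) (k, y)"
  shows "vertex_image k \<le> y" and "y = vertex_image k \<longleftrightarrow> x = 1"
proof -
  have x: "0 \<le> x" "x \<le> 1" and y: "y = g_prev (k + 1) x"
    using assms by (auto simp: step_into_iff)
  show "vertex_image k \<le> y"
    using g_prev_antimono[of x 1 "k + 1"] x y g_prev_one[of k] by simp
  show "y = vertex_image k \<longleftrightarrow> x = 1"
    using g_prev_strict_antimono[of x 1 "k + 1"] x y g_prev_one[of k] by (cases "x = 1") auto
qed

lemma step_inj:
  assumes ac: "step a c" and bc: "step b c" and b: "nonvertex b"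
  shows "a = b"
proof -
  obtain i x j y k z where abc: "a = (i, x)" "b = (j, y)" "c = (k, z)"
    by (metis prod.exhaust)
  have ac': "step (i, x) (k, z)" and bc': "step (j, y) (k, z)"
    using ac bc abc by simp_all
  have sides: "i = k + 2 \<or> i = k + 1" "j = k + 2 \<or> j = k + 1"
    using ac' bc' by (auto simp: step_into_iff)
  show ?thesis
  proof (cases "i = j")
    case True
    have "x = y"
      using step_antitone[of i x k z y z] step_antitone[of i y k z x z] ac' bc' True
      by (metis linorder_neqE_linordered_idom less_irrefl)
    then show ?thesis using abc True by simp
  next
    case False
    then consider "i = k + 2" "j = k + 1" | "i = k + 1" "j = k + 2"
      using sides by auto
    then show ?thesis
    proof cases
      case 1
      then have "z \<le> vertex_image k"
        using step_from_prev_side(1)[of k x z] ac' by simp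
      moreover have "vertex_image k \<le> z" "z \<noteq> vertex_image k"
        using step_from_next_side[of k y z] 1 bc' b abc(2) by auto
      ultimately show ?thesis by simp
    next
      case 2
      then have "vertex_image k \<le> z"
        using step_from_next_side(1)[of k x z] ac' by simp
      moreover have "z \<le> vertex_image k" "z \<noteq> vertex_image k"
        using step_from_prev_side[of k y z] 2 bc' b abc(2) by auto
      ultimately show ?thesis by simp
    qed
  qed
qed

lemma step_target_bounds:
  assumes s: "step (i, x) (k, y)"
  shows "g_next (k + 2) (d (k + 2)) \<le> y \<and> y \<le> g_prev (k + 1) (d (k + 1))"
proof -
  have x: "0 \<le> x" "x \<le> 1"
    using step_source_range[OF s] by simp_all
  have d: "0 \<le> d j" "d j \<le> 1" for j
    using d_pos[of j] d_lt1[of j] by simp_all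
  have "i = k + 2 \<or> i = k + 1"
    using s by (auto simp: step_into_iff)
  then show ?thesis
  proof
    assume i: "i = k + 2"
    have "g_next (k + 2) (d (k + 2)) \<le> y"
      using s i x d g_next_antimono[of x "d (k + 2)" "k + 2"] by (simp add: step_into_iff)
    moreover have "y \<le> g_prev (k + 1) (d (k + 1))"
      using step_from_prev_side(1)[of k x y] s i g_prev_antimono[of "d (k + 1)" 1 "k + 1"] d
        g_prev_one[of k] by simp
    ultimately show ?thesis ..
  next
    assume i: "i = k + 1"
    have "y \<le> g_prev (k + 1) (d (k + 1))"
      using s i x d g_prev_antimono[of "d (k + 1)" x "k + 1"] by (simp add: step_into_iff)
    moreover have "g_next (k + 2) (d (k + 2)) \<le> y"
      using step_from_next_side(1)[of k x y] s i g_next_antimono[of 0 "d (k + 2)" "k + 2"] d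
      unfolding vertex_image_def by simp
    ultimately show ?thesis by simp
  qed
qed

lemma step_target_attained:
  assumes y: "g_next (k + 2) (d (k + 2)) \<le> y" "y \<le> g_prev (k + 1) (d (k + 1))"
  shows "\<exists>a. step a (k, y)"
proof (cases "y \<le> vertex_image k")
  case True
  have "continuous_on {0..d (k + 2)} (g_next (k + 2))"
    using d_lt1 by (intro continuous_on_subset[OF continuous_on_g_next]) (auto intro: less_imp_le)
  then obtain x where "0 \<le> x" "x \<le> d (k + 2)" "g_next (k + 2) x = y"
    using IVT2'[of "g_next (k + 2)" "d (k + 2)" y 0] y True d_pos[of "k + 2"]
    unfolding vertex_image_def by auto
  then have "step (k + 2, x) (k, y)"
    using d_lt1[of "k + 2"] by (simp add: step_into_iff)
  then show ?thesis by blast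
next
  case False
  have "continuous_on {d (k + 1)..1} (g_prev (k + 1))"
    using d_pos by (intro continuous_on_subset[OF continuous_on_g_prev]) (auto intro: less_imp_le)
  then obtain x where "d (k + 1) \<le> x" "x \<le> 1" "g_prev (k + 1) x = y"
    using IVT2'[of "g_prev (k + 1)" 1 y "d (k + 1)"] y False d_lt1[of "k + 1"] g_prev_one[of k]
    by auto
  then have "step (k + 1, x) (k, y)"
    using d_pos[of "k + 1"] by (simp add: step_into_iff)
  then show ?thesis by blast
qed

lemma step_target_between:
  assumes "step (i, x) (k, y1)" "step (i', x') (k, y2)" "min y1 y2 \<le> y" "y \<le> max y1 y2"
  shows "\<exists>a. step a (k, y)"
proof -
  have "y1 \<le> y \<or> y2 \<le> y" "y \<le> y1 \<or> y \<le> y2"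
    using assms(3,4) by (simp_all add: min_le_iff_disj le_max_iff_disj)
  then show ?thesis
    using step_target_bounds[OF assms(1)] step_target_bounds[OF assms(2)] step_target_attained
    by (meson order.trans)
qed

lemma continuous_on_branch: "continuous_on {0..1} (branch i j)"
  unfolding branch_def using continuous_on_g_next continuous_on_g_prev by simp

lemma step_ivt:
  assumes "step (i, u) (j, x)" "step (i, v) (j, x')" "min x x' \<le> y" "y \<le> max x x'"
  shows "\<exists>z. min u v \<le> z \<and> z \<le> max u v \<and> step (i, z) (j, y)"
proof -
  have ivt: "\<exists>z. u \<le> z \<and> z \<le> v \<and> step (i, z) (j, y)"
    if u: "step (i, u) (j, x)" and v: "step (i, v) (j, x')" and uvy: "u \<le> v" "x' \<le> y" "y \<le> x"
    for u v x x'
  proof -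
    have "continuous_on {u..v} (branch i j)"
      using step_source_range[OF u] step_source_range[OF v]
      by (intro continuous_on_subset[OF continuous_on_branch]) auto
    then obtain z where z: "u \<le> z" "z \<le> v" "branch i j z = y"
      using IVT2'[of "branch i j" v y u] u v uvy by (auto simp: step.simps)
    have "allowed i j u" "allowed i j v"
      using u v by (simp_all add: step.simps)
    then have "allowed i j z"
      using z(1,2) unfolding allowed_def by auto
    moreover have "0 \<le> z" "z \<le> 1"
      using z step_source_range[OF u] step_source_range[OF v] by simp_all
    ultimately show ?thesis
      using z by (auto simp: step.simps)
  qed
  show ?thesis
  proof (cases "u \<le> v")
    case True
    then have "x' \<le> x"
      using step_antitone[OF assms(1,2)] assms(1,2) by (cases "u = v") (auto simp: step.simps)
    then show ?thesis
      using ivt[OF assms(1,2) True] assms True by auto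
  next
    case False
    then have "x \<le> x'"
      using step_antitone[OF assms(2,1)] by simp
    then show ?thesis
      using ivt[OF assms(2,1)] assms False by auto
  qed
qed

lemma same_half_same_successor_side:
  assumes "step a b" "step a' b'" "fst a = fst a'" "\<not> at_decision a"
    and "sgn (snd a - d (fst a)) = sgn (snd a' - d (fst a))"
  shows "fst b = fst b'"
proof -
  have "snd a < d (fst a) \<longleftrightarrow> snd a' < d (fst a)" "\<not> at_decision a'"
    using assms(3-5) sgn_eq_imp_neg_iff[OF assms(5)] by (auto simp: sgn_if split: if_splits)
  then show ?thesis
    using step_successor_side[OF assms(1,4)] step_successor_side[OF assms(2)] assms(3) by simp
qed

end

section \<open>Trajectories as chains of steps\<close>

definition pt :: "side_point \<Rightarrow> real^3" where
  "pt s = spt (snd s) (fst s)"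

lemma spt_nth: "spt x i $ l = (if l = i + 1 then 1 - x else if l = i + 2 then x else 0)"
  unfolding spt_def by (auto simp: axis_def)

lemma pt_inj:
  assumes s: "nonvertex s" and s': "0 \<le> snd s'" "snd s' \<le> 1" and eq: "pt s = pt s'"
  shows "s = s'"
proof -
  obtain i x i' x' where ss': "s = (i, x)" "s' = (i', x')"
    by (metis prod.exhaust)
  have e: "spt x i $ l = spt x' i' $ l" for l
    using eq ss' by (simp add: pt_def)
  consider "i' = i" | "i' = i + 1" | "i' = i + 2"
    using cyclic_3_cases[of i' i] by blast
  then show ?thesis
  proof cases
    case 1
    then show ?thesis using e[of "i + 2"] ss' by (simp add: spt_nth)
  next
    case 2
    then show ?thesis using e[of i] e[of "i + 1"] s s' ss' by (simp add: spt_nth)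
  next
    case 3
    then show ?thesis using e[of i] e[of "i + 2"] s s' ss' by (simp add: spt_nth)
  qed
qed

lemma Sides_pt:
  assumes "nonvertex s"
  shows "Sides (pt s) = {fst s}"
proof -
  obtain i x where s: "s = (i, x)" by (cases s)
  have "spt x i $ 1 + spt x i $ 2 + spt x i $ 3 = 1"
    using exhaust_3_disj[of i] by (auto simp: spt_nth)
  moreover have "spt x i $ l = 0 \<longleftrightarrow> l = i" for l
    using assms s exhaust_3_disj[of l] exhaust_3_disj[of i] by (auto simp: spt_nth)
  moreover have "0 \<le> spt x i $ l" for l
    using assms s by (simp add: spt_nth)
  ultimately show ?thesis
    unfolding Sides_def A0side_def pt_def s by auto
qed

lemma continuous_on_pt_side: "continuous_on S (\<lambda>x. pt (i, x))"
proof -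
  have eq: "(\<lambda>x. pt (i, x)) = (\<lambda>x. (1 - x) *\<^sub>R (axis (i + 1) 1 :: real^3) + x *\<^sub>R axis (i + 2) 1)"
    unfolding pt_def spt_def by simp
  show ?thesis
    unfolding eq by (intro continuous_intros)
qed

lemma periodic_orbit_trajectory:
  assumes "in_periodic_orbit \<rho> d u"
  shows "\<exists>z. trajectory \<rho> d z \<and> z 0 = u \<and> eventually_periodic z"
proof -
  obtain m v k where orbit: "periodic_orbit \<rho> d m v" and k: "k < m" "v k = u"
    using assms unfolding in_periodic_orbit_def by blast
  then have m: "1 \<le> m" "\<forall>n<m. v ((n + 1) mod m) \<in> phi \<rho> d (v n)"
    unfolding periodic_orbit_def by simp_all
  define z where "z t = v ((k + t) mod m)" for t
  have "z (Suc t) \<in> phi \<rho> d (z t)" for t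
    using m(2)[rule_format, of "(k + t) mod m"] m(1) unfolding z_def by (simp add: mod_Suc_eq)
  moreover have "z 0 = u"
    using k unfolding z_def by simp
  moreover have "Sides (z (n + m)) = Sides (z n)" for n
    unfolding z_def by (simp add: add.assoc[symmetric])
  ultimately show ?thesis
    using m(1) unfolding trajectory_def eventually_periodic_def by blast
qed

context switching_system
begin

lemma fmap_nth: "fmap \<rho> j z $ l =
    (if l = j then 0 else ((1 - \<rho> j) * z $ l + \<rho> l * z $ j) / ((1 - \<rho> j) + \<theta> * z $ j))"
proof -
  have "fmap \<rho> j z $ l = (\<Sum>i\<in>UNIV - {j}. (if l = i then ((1 - \<rho> j) * z $ i + \<rho> i * z $ j) /
      ((1 - \<rho> j) + \<theta> * z $ j) else 0))"
    unfolding fmap_def by (simp add: sum_component axis_def if_distrib cong: if_cong)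
  then show ?thesis by (simp add: sum.delta')
qed

lemma fmap_spt_next:
  assumes "0 \<le> x" "x \<le> 1"
  shows "fmap \<rho> (i + 1) (spt x i) = spt (g_next i x) (i + 1)"
proof (rule vec_eq_iff[THEN iffD2], rule allI)
  fix l :: 3
  have den: "1 - \<rho> (i + 1) + \<theta> * (1 - x) > 0"
    using assms theta_pos rho_lt1[of "i + 1"] by (simp add: add_pos_nonneg)
  consider "l = i" | "l = i + 1" | "l = i + 2"
    using cyclic_3_cases[of l i] by blast
  then show "fmap \<rho> (i + 1) (spt x i) $ l = spt (g_next i x) (i + 1) $ l"
  proof cases
    case 3
    have "((1 - \<rho> (i + 1)) * x + \<rho> (i + 2) * (1 - x)) / (1 - \<rho> (i + 1) + \<theta> * (1 - x))
        = 1 - g_next i x"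
      using den unfolding g_next_def linfrac_def
      by (simp add: field_simps) (simp add: theta_rotate[of i] algebra_simps)
    then show ?thesis using 3 by (simp add: fmap_nth spt_nth)
  qed (simp_all add: fmap_nth spt_nth g_next_def linfrac_def)
qed

lemma fmap_spt_prev:
  assumes "0 \<le> x" "x \<le> 1"
  shows "fmap \<rho> (i + 2) (spt x i) = spt (g_prev i x) (i + 2)"
proof (rule vec_eq_iff[THEN iffD2], rule allI)
  fix l :: 3
  have den: "1 - \<rho> (i + 2) + \<theta> * x > 0"
    using assms theta_pos rho_lt1[of "i + 2"] by (simp add: add_pos_nonneg)
  consider "l = i" | "l = i + 1" | "l = i + 2"
    using cyclic_3_cases[of l i] by blast
  then show "fmap \<rho> (i + 2) (spt x i) $ l = spt (g_prev i x) (i + 2) $ l"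
  proof cases
    case 2
    have "((1 - \<rho> (i + 2)) * (1 - x) + \<rho> (i + 1) * x) / (1 - \<rho> (i + 2) + \<theta> * x) = g_prev i x"
      using den unfolding g_prev_def linfrac_def
      by (simp add: field_simps) (simp add: theta_rotate[of i] algebra_simps)
    then show ?thesis using 2 by (simp add: fmap_nth spt_nth)
  qed (simp_all add: fmap_nth spt_nth g_prev_def linfrac_def)
qed

lemma fmap_pt_step: "step s t \<Longrightarrow> fmap \<rho> (fst t) (pt s) = pt t"
  using fmap_spt_next fmap_spt_prev by (cases s; cases t) (auto simp: step_iff pt_def)

lemma Rule_iff: "j \<in> Rule d z \<longleftrightarrow> (\<exists>x i. 0 \<le> x \<and> x \<le> 1 \<and> z = spt x i \<and> allowed i j x)"
  unfolding Rule_def allowed_def by (auto, force+)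

lemma phi_step: "step s t \<Longrightarrow> pt t \<in> phi \<rho> d (pt s)"
  unfolding phi_def using fmap_pt_step[of s t]
  by (cases s; cases t) (force simp: Rule_iff step.simps pt_def)

lemma phi_imp_step:
  assumes "y \<in> phi \<rho> d z"
  shows "\<exists>s t. z = pt s \<and> step s t \<and> y = pt t"
proof -
  obtain j x i where "0 \<le> x" "x \<le> 1" "z = spt x i" "allowed i j x" "y = fmap \<rho> j z"
    using assms unfolding phi_def Rule_iff by blast
  then have "z = pt (i, x)" "step (i, x) (j, branch i j x)" "y = pt (j, branch i j x)"
    using fmap_pt_step[of "(i, x)" "(j, branch i j x)"] by (auto simp: step.simps pt_def)
  then show ?thesis by blast
qed

lemma phi_nonvertex:
  assumes "nonvertex s" "y \<in> phi \<rho> d (pt s)"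
  shows "\<exists>t. step s t \<and> y = pt t"
proof -
  obtain s' t where "pt s = pt s'" "step s' t" "y = pt t"
    using phi_imp_step[OF assms(2)] by blast
  moreover have "s = s'"
    using pt_inj[of s s'] assms(1) step_source_range[OF \<open>step s' t\<close>] \<open>pt s = pt s'\<close> by simp
  ultimately show ?thesis by blast
qed

definition forward_chain :: "(nat \<Rightarrow> side_point) \<Rightarrow> bool" where
  "forward_chain \<zeta> \<longleftrightarrow> (\<forall>n. step (\<zeta> n) (\<zeta> (Suc n)))"

definition backward_chain :: "(nat \<Rightarrow> side_point) \<Rightarrow> bool" where
  "backward_chain Q \<longleftrightarrow> (\<forall>k. step (Q (Suc k)) (Q k))"

lemma trajectory_lift:
  assumes "trajectory \<rho> d z"
  shows "\<exists>\<zeta>. forward_chain \<zeta> \<and> (\<forall>n. z n = pt (\<zeta> n))"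
proof -
  have z: "z (Suc n) \<in> phi \<rho> d (z n)" for n
    using assms unfolding trajectory_def by blast
  let ?P = "\<lambda>n a. z n = pt a \<and> (\<exists>b. step a b \<and> z (Suc n) = pt b)"
  have "\<exists>a. ?P 0 a"
    using phi_imp_step[OF z[of 0]] by auto
  moreover have "\<exists>b. ?P (Suc n) b \<and> step a b" if "?P n a" for n a
  proof -
    from that obtain b where b: "step a b" "z (Suc n) = pt b" by blast
    then have "\<exists>c. step b c \<and> z (Suc (Suc n)) = pt c"
      using phi_nonvertex[OF step_target_nonvertex[OF b(1)]] z[of "Suc n"] by simp
    then show ?thesis using b by blast
  qed
  ultimately obtain \<zeta> where "\<forall>n. ?P n (\<zeta> n) \<and> step (\<zeta> n) (\<zeta> (Suc n))"
    using dependent_nat_choice[of ?P "\<lambda>n a b. step a b"] by blast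
  then show ?thesis unfolding forward_chain_def by blast
qed

lemma forward_chain_exists:
  assumes "0 \<le> snd s" "snd s \<le> 1"
  shows "\<exists>\<zeta>. \<zeta> 0 = s \<and> forward_chain \<zeta>"
proof -
  let ?P = "\<lambda>n a. 0 \<le> snd a \<and> snd a \<le> 1 \<and> (n = 0 \<longrightarrow> a = s)"
  have "\<exists>b. ?P (Suc n) b \<and> step a b" if a: "?P n a" for n a
  proof -
    obtain b where "step a b" using a step_exists[of a] by blast
    moreover have "0 \<le> snd b \<and> snd b \<le> 1" using step_target_nonvertex[OF \<open>step a b\<close>] by simp
    ultimately show ?thesis by blast
  qed
  then obtain \<zeta> where "\<forall>n. ?P n (\<zeta> n) \<and> step (\<zeta> n) (\<zeta> (Suc n))"
    using dependent_nat_choice[of ?P "\<lambda>n a b. step a b"] assms by blast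
  then show ?thesis unfolding forward_chain_def by blast
qed

lemma trajectory_forward_chain: "forward_chain \<zeta> \<Longrightarrow> trajectory \<rho> d (\<lambda>n. pt (\<zeta> n))"
  unfolding forward_chain_def trajectory_def using phi_step by blast

end

section \<open>Backward paths and itineraries\<close>

context switching_system
begin

definition back_path :: "nat \<Rightarrow> side_point \<Rightarrow> (nat \<Rightarrow> side_point) \<Rightarrow> bool" where
  "back_path N s p \<longleftrightarrow> p 0 = s \<and> (\<forall>k<N. step (p (Suc k)) (p k))"

lemma forward_chain_back_path: "forward_chain \<zeta> \<Longrightarrow> N \<le> n \<Longrightarrow> back_path N (\<zeta> n) (\<lambda>k. \<zeta> (n - k))"
  unfolding forward_chain_def back_path_def by (metis Suc_diff_Suc diff_zero less_le_trans)

lemma back_path_preimage: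
  assumes p: "back_path N s p" and N: "1 \<le> N"
  shows "pt (p N) \<in> preimages \<rho> d (pt s)"
proof -
  have "step (p 1) s"
    using p N unfolding back_path_def by auto
  then obtain \<zeta> where \<zeta>: "\<zeta> 0 = s" "forward_chain \<zeta>"
    using forward_chain_exists step_target_nonvertex by (meson less_imp_le)
  define \<eta> where "\<eta> r = (if r \<le> N then p (N - r) else \<zeta> (r - N))" for r
  have "step (\<eta> r) (\<eta> (Suc r))" for r
  proof (cases "r < N")
    case True
    then have "step (p (Suc (N - Suc r))) (p (N - Suc r))"
      using p unfolding back_path_def by auto
    then show ?thesis
      using True by (simp add: \<eta>_def Suc_diff_Suc)
  next
    case False
    then show ?thesis
      using \<zeta> p unfolding \<eta>_def forward_chain_def back_path_def
      by (auto simp: Suc_diff_le not_less_eq_eq dest: spec[of _ "r - N"])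
  qed
  then have "trajectory \<rho> d (\<lambda>r. pt (\<eta> r))"
    by (intro trajectory_forward_chain) (simp add: forward_chain_def)
  moreover have "\<eta> 0 = p N" "\<eta> N = s"
    using p unfolding \<eta>_def back_path_def by simp_all
  ultimately show ?thesis
    unfolding preimages_def using N by force
qed

lemma preimage_back_path:
  assumes s: "nonvertex s" and v: "v \<in> preimages \<rho> d (pt s)"
  shows "\<exists>N p. 1 \<le> N \<and> back_path N s p \<and> v = pt (p N)"
proof -
  obtain z t where z: "trajectory \<rho> d z" "z 0 = v" "1 \<le> t" "z t = pt s"
    using v unfolding preimages_def by blast
  obtain \<zeta> where \<zeta>: "forward_chain \<zeta>" "\<forall>n. z n = pt (\<zeta> n)"
    using trajectory_lift[OF z(1)] by blast
  have "\<zeta> t = s"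
    using pt_inj[OF s, of "\<zeta> t"] step_source_range[of "\<zeta> t" "\<zeta> (Suc t)"] \<zeta> z(4)
    unfolding forward_chain_def by simp
  then have "back_path t s (\<lambda>k. \<zeta> (t - k))"
    using forward_chain_back_path[OF \<zeta>(1), of t t] by simp
  then show ?thesis
    using z \<zeta>(2) by (intro exI[of _ t] exI[of _ "\<lambda>k. \<zeta> (t - k)"]) auto
qed

lemma back_path_mono: "back_path N s p \<Longrightarrow> M \<le> N \<Longrightarrow> back_path M s p"
  unfolding back_path_def by auto

lemma back_path_nonvertex: "back_path N s p \<Longrightarrow> k < N \<Longrightarrow> nonvertex (p k)"
  unfolding back_path_def using step_target_nonvertex by blast

lemma back_path_unique: "back_path N s p \<Longrightarrow> back_path N s q \<Longrightarrow> k < N \<Longrightarrow> p k = q k"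
proof (induction k)
  case 0
  then show ?case by (simp add: back_path_def)
next
  case (Suc k)
  have "step (p (Suc k)) (p k)" "step (q (Suc k)) (q k)"
    using Suc.prems unfolding back_path_def by auto
  then show ?case
    using step_inj[of "p (Suc k)" "q k" "q (Suc k)"] back_path_nonvertex[OF Suc.prems(2,3)] Suc by simp
qed

lemma backward_chain_back_path: "backward_chain Q \<Longrightarrow> back_path N (Q k) (\<lambda>j. Q (k + j))"
  unfolding backward_chain_def back_path_def by simp

lemma back_path_along_chain:
  assumes Q: "backward_chain Q" and p: "back_path N (Q 0) p" and "k \<le> N"
  shows "p k = Q k"
  using \<open>k \<le> N\<close>
proof (induction k)
  case 0
  then show ?case using p by (simp add: back_path_def)
next
  case (Suc k)
  have "step (p (Suc k)) (p k)" "step (Q (Suc k)) (Q k)"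
    using p Q Suc.prems unfolding back_path_def backward_chain_def by auto
  moreover have "nonvertex (Q (Suc k))"
    using Q step_target_nonvertex unfolding backward_chain_def by blast
  ultimately show ?case
    using step_inj[of "p (Suc k)" "Q k" "Q (Suc k)"] Suc by simp
qed

lemma backward_chain_shift_eq:
  assumes Q: "backward_chain Q" and eq: "Q a = Q b"
  shows "Q (a + j) = Q (b + j)"
proof -
  have "backward_chain (\<lambda>k. Q (b + k))"
    using Q unfolding backward_chain_def by simp
  moreover have "back_path j (Q b) (\<lambda>k. Q (a + k))"
    using backward_chain_back_path[OF Q, of j a] eq by simp
  ultimately show ?thesis
    using back_path_along_chain[of "\<lambda>k. Q (b + k)" j] by simp
qed

lemma backward_chain_periodic:
  assumes Q: "backward_chain Q" and r: "Q r = Q 0"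
  shows "Q (j + n * r) = Q j"
proof (induction n)
  case (Suc n)
  have "Q (r + (j + n * r)) = Q (0 + (j + n * r))"
    using backward_chain_shift_eq[OF Q r] .
  then show ?case
    using Suc by (simp add: algebra_simps)
qed simp

definition has_back_path :: "nat \<Rightarrow> side_point \<Rightarrow> bool" where
  "has_back_path N s \<longleftrightarrow> (\<exists>p. back_path N s p)"

definition itin :: "nat \<Rightarrow> side_point \<Rightarrow> 3 list" where
  "itin N s = (SOME c. \<exists>p. back_path N s p \<and> c = map (\<lambda>k. fst (p k)) [0..<N])"

lemma itin_eq: "back_path N s p \<Longrightarrow> itin N s = map (\<lambda>k. fst (p k)) [0..<N]"
proof -
  assume p: "back_path N s p"
  obtain q where q: "back_path N s q" "itin N s = map (\<lambda>k. fst (q k)) [0..<N]"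
    using someI_ex[of "\<lambda>c. \<exists>p. back_path N s p \<and> c = map (\<lambda>k. fst (p k)) [0..<N]"] p
    unfolding itin_def by blast
  then show ?thesis
    using back_path_unique[OF p q(1)] by simp
qed

lemma length_itin: "has_back_path N s \<Longrightarrow> length (itin N s) = N"
  unfolding has_back_path_def using itin_eq by fastforce

lemma itin_nth: "back_path N s p \<Longrightarrow> k < N \<Longrightarrow> itin N s ! k = fst (p k)"
  using itin_eq by simp

lemma itin_head: "has_back_path N s \<Longrightarrow> 1 \<le> N \<Longrightarrow> itin N s ! 0 = fst s"
  unfolding has_back_path_def using itin_nth[of N s _ 0] by (auto simp: back_path_def)

lemma itin_eq_iff:
  "back_path N s p \<Longrightarrow> back_path N s' p' \<Longrightarrow> itin N s = itin N s' \<longleftrightarrow> (\<forall>k<N. fst (p k) = fst (p' k))"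
  using itin_eq[of N s p] itin_eq[of N s' p'] by (auto simp: map_eq_conv)

lemma back_path_Cons: "step s t \<Longrightarrow> back_path N s p \<Longrightarrow> back_path (Suc N) t (case_nat t p)"
  unfolding back_path_def by (auto simp: less_Suc_eq_0_disj)

lemma itin_step:
  assumes "step s t" "has_back_path N s"
  shows "has_back_path N t \<and> itin N t = take N (fst t # itin N s)"
proof -
  obtain p where p: "back_path N s p"
    using assms(2) unfolding has_back_path_def by blast
  have tp: "back_path N t (case_nat t p)"
    using back_path_mono[OF back_path_Cons[OF assms(1) p]] by simp
  have "map (\<lambda>k. fst (case_nat t p k)) [0..<N] = take N (fst t # map (\<lambda>k. fst (p k)) [0..<N])"
    by (rule nth_equalityI) (auto simp: nth_Cons split: nat.split)
  then show ?thesis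
    using tp itin_eq[OF tp] itin_eq[OF p] unfolding has_back_path_def by auto
qed

lemma forward_chain_has_back_path:
  assumes "\<forall>N. has_back_path N (\<zeta> 0)" "forward_chain \<zeta>"
  shows "has_back_path N (\<zeta> n)"
  using assms itin_step unfolding forward_chain_def by (induction n) blast+

lemma itin_tracking:
  assumes steps: "\<And>t. t < T \<Longrightarrow> step (x t) (x (Suc t)) \<and> step (y t) (y (Suc t))"
    and start: "has_back_path N (x 0)" "has_back_path N (y 0)" "itin N (x 0) = itin N (y 0)"
    and follow: "\<And>t. t < T \<Longrightarrow> itin N (x t) = itin N (y t) \<Longrightarrow> fst (x (Suc t)) = fst (y (Suc t))"
  shows "has_back_path N (x T) \<and> has_back_path N (y T) \<and> itin N (x T) = itin N (y T)"
  using steps follow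
proof (induction T)
  case 0
  then show ?case using start by simp
next
  case (Suc T)
  then have IH: "has_back_path N (x T)" "has_back_path N (y T)" "itin N (x T) = itin N (y T)"
    by simp_all
  have "step (x T) (x (Suc T))" "step (y T) (y (Suc T))"
    using Suc.prems(1) by simp_all
  then show ?case
    using itin_step IH Suc.prems(2)[of T] by simp
qed

lemma step_sgn:
  assumes "step a b" "step a' b'" "fst a = fst a'" "fst b = fst b'"
  shows "sgn (snd b - snd b') = - sgn (snd a - snd a')"
proof -
  obtain i x x' j y y' where ab: "a = (i, x)" "a' = (i, x')" "b = (j, y)" "b' = (j, y')"
    using assms(3,4) by (metis prod.collapse)
  have s: "step (i, x) (j, y)" "step (i, x') (j, y')"
    using assms(1,2) ab by simp_all
  consider "x < x'" | "x = x'" | "x' < x" by linarith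
  then show ?thesis
  proof cases
    case 1 then show ?thesis using step_antitone[OF s 1] ab by (simp add: sgn_if)
  next
    case 2 then show ?thesis using step_unique[OF s(1), of "(j, y')"] s ab by simp
  next
    case 3 then show ?thesis using step_antitone[OF s(2,1) 3] ab by (simp add: sgn_if)
  qed
qed

lemma back_path_sgn:
  assumes p: "back_path N s p" and p': "back_path N s' p'" and sides: "\<forall>k<N. fst (p k) = fst (p' k)"
    and "j < N"
  shows "sgn (snd (p j) - snd (p' j)) = (-1) ^ j * sgn (snd s - snd s')"
  using \<open>j < N\<close>
proof (induction j)
  case 0
  then show ?case using p p' by (simp add: back_path_def)
next
  case (Suc j)
  have "step (p (Suc j)) (p j)" "step (p' (Suc j)) (p' j)"
    using p p' Suc.prems unfolding back_path_def by auto
  then have "sgn (snd (p j) - snd (p' j)) = - sgn (snd (p (Suc j)) - snd (p' (Suc j)))"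
    using step_sgn sides Suc.prems by simp
  then show ?case
    using Suc by simp
qed

lemma back_path_sgn_even_shift:
  assumes p: "back_path N s p" and p': "back_path N s' p'" and sides: "\<forall>k<N. fst (p k) = fst (p' k)"
    and "j + 2 * m < N"
  shows "sgn (snd (p (j + 2 * m)) - snd (p' (j + 2 * m))) = sgn (snd (p j) - snd (p' j))"
  using back_path_sgn[OF p p' sides] assms(4) by (simp add: power_add power_mult)

lemma back_path_contract:
  assumes p: "back_path B s p" and q: "back_path B s' q" and sides: "\<forall>k\<le>B. fst (p k) = fst (q k)"
  shows "\<bar>snd s - snd s'\<bar> \<le> lip ^ B * \<bar>snd (p B) - snd (q B)\<bar>"
proof -
  have "\<bar>snd s - snd s'\<bar> \<le> lip ^ j * \<bar>snd (p j) - snd (q j)\<bar>" if "j \<le> B" for j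
    using that
  proof (induction j)
    case 0
    then show ?case using p q by (simp add: back_path_def)
  next
    case (Suc j)
    obtain i x x' k y y' where pq: "p (Suc j) = (i, x)" "q (Suc j) = (i, x')" "p j = (k, y)" "q j = (k, y')"
      using sides Suc.prems by (metis Suc_leD prod.collapse)
    have "step (i, x) (k, y)" "step (i, x') (k, y')"
      using p q Suc.prems pq unfolding back_path_def by (metis Suc_le_lessD)+
    then have "\<bar>y - y'\<bar> \<le> lip * \<bar>x - x'\<bar>"
      by (rule step_lipschitz)
    then have "lip ^ j * \<bar>snd (p j) - snd (q j)\<bar> \<le> lip ^ Suc j * \<bar>snd (p (Suc j)) - snd (q (Suc j))\<bar>"
      using pq lip_pos by (simp add: mult_left_mono)
    then show ?case
      using Suc by simp
  qed
  then show ?thesis by simp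
qed

lemma back_path_between:
  assumes "back_path (Suc N) s p" "back_path (Suc N) s' p'" "\<forall>k<Suc N. fst (p k) = fst (p' k)"
    and "min (snd s) (snd s') \<le> y" "y \<le> max (snd s) (snd s')"
  shows "\<exists>P. back_path (Suc N) (fst s, y) P \<and> (\<forall>k<Suc N. fst (P k) = fst (p k))"
  using assms
proof (induction N arbitrary: s s' p p' y)
  case 0
  obtain k x x' where s: "s = (k, x)" "s' = (k, x')"
    using 0(1-3) unfolding back_path_def by (metis prod.collapse zero_less_Suc)
  have "step (fst (p 1), snd (p 1)) (k, x)" "step (fst (p' 1), snd (p' 1)) (k, x')"
    using 0(1,2) s unfolding back_path_def by auto
  then obtain c where "step c (fst s, y)"
    using step_target_between[of "fst (p 1)" "snd (p 1)" k x "fst (p' 1)" "snd (p' 1)" x' y] 0(4,5) s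
    by auto
  then have "back_path (Suc 0) (fst s, y) (case_nat (fst s, y) (\<lambda>_. c))"
    unfolding back_path_def by simp
  then show ?case
    using 0(1) unfolding back_path_def by fastforce
next
  case (Suc N)
  obtain c u v where pu: "p 1 = (c, u)" "p' 1 = (c, v)"
    using Suc.prems(3) by (metis One_nat_def Suc_less_eq prod.collapse zero_less_Suc)
  have "step (c, u) (fst s, snd s)" "step (c, v) (fst s, snd s')"
    using Suc.prems(1-3) pu unfolding back_path_def by auto
  then obtain z where z: "min u v \<le> z" "z \<le> max u v" "step (c, z) (fst s, y)"
    using step_ivt Suc.prems(4,5) by blast
  have "back_path (Suc N) (c, u) (\<lambda>k. p (Suc k))" "back_path (Suc N) (c, v) (\<lambda>k. p' (Suc k))"
    using Suc.prems(1,2) pu unfolding back_path_def by auto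
  then obtain P where P: "back_path (Suc N) (c, z) P" "\<forall>k<Suc N. fst (P k) = fst (p (Suc k))"
    using Suc.IH[of "(c, u)" "\<lambda>k. p (Suc k)" "(c, v)" "\<lambda>k. p' (Suc k)" z] Suc.prems(3) z(1,2) by auto
  have "back_path (Suc (Suc N)) (fst s, y) (case_nat (fst s, y) P)"
    using back_path_Cons[OF z(3) P(1)] .
  moreover have "\<forall>k<Suc (Suc N). fst (case_nat (fst s, y) P k) = fst (p k)"
    using P(2) Suc.prems(1) by (auto simp: back_path_def less_Suc_eq_0_disj)
  ultimately show ?case by blast
qed

lemma straddling_back_paths_avoid_decisions:
  assumes p: "back_path N s p" and p': "back_path N s' p'" and P: "back_path N (dp i) P"
    and sides: "\<forall>k<N. fst (p k) = fst (P k) \<and> fst (p' k) = fst (P k)"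
    and straddle: "sgn (snd s' - d i) = - sgn (snd s - d i)" "sgn (snd s - d i) \<noteq> 0"
    and k: "1 \<le> k" "k < N"
  shows "\<not> at_decision (P k)"
proof
  assume dec: "at_decision (P k)"
  define c where "c = fst (P k)"
  have "sgn (snd (p k) - d c) = (-1) ^ k * sgn (snd s - d i)"
    "sgn (snd (p' k) - d c) = (-1) ^ k * sgn (snd s' - d i)"
    using back_path_sgn[OF p P _ k(2)] back_path_sgn[OF p' P _ k(2)] P sides dec
    unfolding c_def by (simp_all add: back_path_def)
  then have opp: "sgn (snd (p k) - d c) = - sgn (snd (p' k) - d c)" "sgn (snd (p k) - d c) \<noteq> 0"
    using straddle by simp_all
  then have "snd (p k) - d c < 0 \<longleftrightarrow> \<not> snd (p' k) - d c < 0"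
    by (rule sgn_opposite_imp_neg_iff)
  then have halves: "snd (p k) < d c \<longleftrightarrow> \<not> snd (p' k) < d c"
    by simp
  have sides_k: "fst (p k) = c" "fst (p' k) = c"
    using sides k unfolding c_def by auto
  then have nd_k: "\<not> at_decision (p k)" "\<not> at_decision (p' k)"
    using opp by (auto simp: sgn_if)
  have "Suc (k - 1) = k" "k - 1 < N"
    using k by auto
  then have "step (p k) (p (k - 1))" "step (p' k) (p' (k - 1))"
    using p p' unfolding back_path_def by metis+
  then have "fst (p (k - 1)) \<noteq> fst (p' (k - 1))"
    using step_successor_side[OF _ nd_k(1)] step_successor_side[OF _ nd_k(2)] halves sides_k by auto
  then show False
    using sides k by simp
qed

lemma finite_step_preds: "finite {a. step a b}"
proof (cases "\<exists>c. step c b \<and> nonvertex c")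
  case True
  then obtain c where "step c b" "nonvertex c" by blast
  then have "{a. step a b} \<subseteq> {c}"
    using step_inj by blast
  then show ?thesis by (rule finite_subset) simp
next
  case False
  have "{a. step a b} \<subseteq> UNIV \<times> {0, 1}"
  proof
    fix a assume "a \<in> {a. step a b}"
    then have "step a b" "\<not> nonvertex a"
      using False by blast+
    then show "a \<in> UNIV \<times> {0, 1}"
      using step_source_range[of a b] by (cases a) auto
  qed
  then show ?thesis by (rule finite_subset) simp
qed

lemma finite_back_path_ends: "finite {p N | p. back_path N s p}"
proof (induction N)
  case 0
  have "{p 0 | p. back_path 0 s p} \<subseteq> {s}"
    unfolding back_path_def by blast
  then show ?case
    by (rule finite_subset) simp
next
  case (Suc N)
  have "{p (Suc N) | p. back_path (Suc N) s p} \<subseteq> (\<Union>b\<in>{p N | p. back_path N s p}. {a. step a b})"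
  proof
    fix a assume "a \<in> {p (Suc N) | p. back_path (Suc N) s p}"
    then obtain p where p: "back_path (Suc N) s p" "a = p (Suc N)" by blast
    then have "p N \<in> {p N | p. back_path N s p}" "step a (p N)"
      using back_path_mono[OF p(1), of N] unfolding back_path_def by auto
    then show "a \<in> (\<Union>b\<in>{p N | p. back_path N s p}. {a. step a b})" by blast
  qed
  moreover have "finite (\<Union>b\<in>{p N | p. back_path N s p}. {a. step a b})"
    by (intro finite_UN_I Suc finite_step_preds)
  ultimately show ?case
    by (rule finite_subset)
qed

lemma infinite_preimages_has_back_path:
  assumes s: "nonvertex s" and inf: "infinite (preimages \<rho> d (pt s))"
  shows "has_back_path N s"
proof (rule ccontr)
  assume N: "\<not> has_back_path N s"
  have "preimages \<rho> d (pt s) \<subseteq> pt ` (\<Union>n<N. {p n | p. back_path n s p})"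
  proof
    fix v assume "v \<in> preimages \<rho> d (pt s)"
    then obtain n p where "back_path n s p" "v = pt (p n)"
      using preimage_back_path[OF s] by blast
    moreover have "n < N"
      using N back_path_mono[OF \<open>back_path n s p\<close>, of N] unfolding has_back_path_def by fastforce
    ultimately show "v \<in> pt ` (\<Union>n<N. {p n | p. back_path n s p})" by blast
  qed
  moreover have "finite (pt ` (\<Union>n<N. {p n | p. back_path n s p}))"
    using finite_back_path_ends by simp
  ultimately show False
    using inf finite_subset by blast
qed

lemma backward_chain_exists:
  assumes "\<forall>N. has_back_path N s"
  shows "\<exists>Q. Q 0 = s \<and> backward_chain Q"
proof -
  define P where "P N = (SOME p. back_path N s p)" for N
  have P: "back_path N s (P N)" for N
    unfolding P_def using assms someI_ex unfolding has_back_path_def by metis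
  define Q where "Q k = P (Suc k) k" for k
  have eq: "P (Suc k) k = P (Suc (Suc k)) k" for k
    using back_path_unique[OF P back_path_mono[OF P]] by simp
  have "step (P (Suc (Suc k)) (Suc k)) (P (Suc (Suc k)) k)" for k
    using P[of "Suc (Suc k)"] unfolding back_path_def by simp
  then have "step (Q (Suc k)) (Q k)" for k
    unfolding Q_def eq[of k] .
  moreover have "Q 0 = s"
    using P[of 1] unfolding Q_def back_path_def by simp
  ultimately show ?thesis
    unfolding backward_chain_def by blast
qed

lemma preimages_backward_chain:
  assumes Q: "backward_chain Q"
  shows "preimages \<rho> d (pt (Q 0)) = pt ` Q ` {1..}"
proof
  show "preimages \<rho> d (pt (Q 0)) \<subseteq> pt ` Q ` {1..}"
  proof
    fix v assume "v \<in> preimages \<rho> d (pt (Q 0))"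
    moreover have "nonvertex (Q 0)"
      using Q step_target_nonvertex unfolding backward_chain_def by blast
    ultimately obtain N p where "1 \<le> N" "back_path N (Q 0) p" "v = pt (p N)"
      using preimage_back_path by blast
    then show "v \<in> pt ` Q ` {1..}"
      using back_path_along_chain[OF Q \<open>back_path N (Q 0) p\<close>, of N] by auto
  qed
  show "pt ` Q ` {1..} \<subseteq> preimages \<rho> d (pt (Q 0))"
  proof
    fix v assume "v \<in> pt ` Q ` {1..}"
    then obtain N where "1 \<le> N" "v = pt (Q N)" by auto
    then show "v \<in> preimages \<rho> d (pt (Q 0))"
      using back_path_preimage[OF backward_chain_back_path[OF Q, of N 0]] by simp
  qed
qed

lemma backward_chain_inj_on_pt:
  assumes "backward_chain Q"
  shows "inj_on pt (range Q)"
proof (rule inj_onI)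
  fix x y assume "x \<in> range Q" "y \<in> range Q" "pt x = pt y"
  moreover have "nonvertex z" if "z \<in> range Q" for z
    using assms step_target_nonvertex that unfolding backward_chain_def by blast
  ultimately have "nonvertex x" "nonvertex y" "pt x = pt y"
    by blast+
  then show "x = y"
    using pt_inj[of x y] by simp
qed

lemma backward_chain_finite_preimages_repeats:
  assumes Q: "backward_chain Q" and fin: "finite (preimages \<rho> d (pt (Q 0)))"
  shows "\<exists>a b. a < b \<and> Q a = Q b"
proof (rule ccontr)
  assume "\<nexists>a b. a < b \<and> Q a = Q b"
  then have "inj Q"
    by (metis injI linorder_neqE_nat)
  then have "inj_on (pt \<circ> Q) {1..}"
    using backward_chain_inj_on_pt[OF Q] by (auto intro: comp_inj_on inj_on_subset)
  then have "infinite ((pt \<circ> Q) ` {1..})"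
    using finite_imageD infinite_Ici by blast
  then show False
    using fin preimages_backward_chain[OF Q] by (simp add: image_comp)
qed

lemma backward_chain_infinite_preimages_inj:
  assumes Q: "backward_chain Q" and inf: "infinite (preimages \<rho> d (pt (Q 0)))"
  shows "inj Q"
proof (rule injI, rule ccontr)
  fix a b assume "Q a = Q b" "a \<noteq> b"
  then obtain a b where ab: "a < b" "Q a = Q b"
    by (metis linorder_neqE_nat)
  have "Q n \<in> Q ` {..<b}" for n
  proof (induction n rule: less_induct)
    case (less n)
    show ?case
    proof (cases "n < b")
      case False
      then have "Q n = Q (a + (n - b))"
        using backward_chain_shift_eq[OF Q ab(2), of "n - b"] by simp
      then show ?thesis
        using less[of "a + (n - b)"] False ab(1) by simp
    qed simp
  qed
  then have "pt ` Q ` {1..} \<subseteq> pt ` Q ` {..<b}" by blast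
  moreover have "finite (pt ` Q ` {..<b})" by simp
  ultimately have "finite (preimages \<rho> d (pt (Q 0)))"
    using preimages_backward_chain[OF Q] finite_subset by metis
  then show False using inf by simp
qed

lemma backward_chain_returns_or_merges:
  assumes Q: "backward_chain Q" and "a < b" "Q a = Q b"
  shows "(\<exists>r\<ge>1. Q r = Q 0) \<or> (\<exists>a b. 0 < a \<and> a < b \<and> Q a = Q b \<and> Q (a - 1) \<noteq> Q (b - 1))"
  using assms(2,3)
proof (induction a arbitrary: b)
  case 0
  then show ?case by (intro disjI1 exI[of _ b]) auto
next
  case (Suc a)
  show ?case
  proof (cases "Q a = Q (b - 1)")
    case True
    then show ?thesis using Suc.IH[of "b - 1"] Suc.prems by simp
  next
    case False
    then have "0 < Suc a \<and> Suc a < b \<and> Q (Suc a) = Q b \<and> Q (Suc a - 1) \<noteq> Q (b - 1)"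
      using Suc.prems by simp
    then show ?thesis by blast
  qed
qed

lemma backward_chain_merge:
  assumes Q: "backward_chain Q" and ab: "0 < a" "a < b" "Q a = Q b" "Q (a - 1) \<noteq> Q (b - 1)"
  shows "at_decision (Q a)" "fst (Q (a - 1)) \<noteq> fst (Q (b - 1))"
    and "Q (a + 2 * (b - a)) = Q a" "Q (a + 2 * (b - a) - 1) = Q (b - 1)"
proof -
  have "Suc (a - 1) = a" "Suc (b - 1) = b"
    using ab(1,2) by auto
  then have "step (Q a) (Q (a - 1))" "step (Q a) (Q (b - 1))"
    using Q ab(3) unfolding backward_chain_def by metis+
  then show "at_decision (Q a)" "fst (Q (a - 1)) \<noteq> fst (Q (b - 1))"
    using step_two_successors step_unique ab(4) by blast+
  have idx: "a + (b - a) = b" "b + (b - a) = a + 2 * (b - a)"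
    "a + (b - a - 1) = b - 1" "b + (b - a - 1) = a + 2 * (b - a) - 1"
    using ab(1,2) by auto
  have "Q (a + (b - a)) = Q (b + (b - a))" "Q (a + (b - a - 1)) = Q (b + (b - a - 1))"
    using backward_chain_shift_eq[OF Q ab(3)] by blast+
  then show "Q (a + 2 * (b - a)) = Q a" "Q (a + 2 * (b - a) - 1) = Q (b - 1)"
    unfolding idx using ab(3) by simp_all
qed

lemma backward_chain_repeat_decision:
  assumes Q: "backward_chain Q" and "a < b" "Q a = Q b" and Q0: "at_decision (Q 0)"
  shows "\<exists>k\<ge>1. at_decision (Q k)"
  using backward_chain_returns_or_merges[OF assms(1-3)]
proof
  assume "\<exists>r\<ge>1. Q r = Q 0"
  then show ?thesis using Q0 by metis
next
  assume "\<exists>a b. 0 < a \<and> a < b \<and> Q a = Q b \<and> Q (a - 1) \<noteq> Q (b - 1)"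
  then obtain a b where "0 < a" "a < b" "Q a = Q b" "Q (a - 1) \<noteq> Q (b - 1)" by blast
  then show ?thesis
    using backward_chain_merge(1)[OF Q] by (metis One_nat_def Suc_leI)
qed

text \<open>On a backward cycle Q of length r, Q (cycle_walk r t) is the t-th forward iterate of
  Q 0; the index is kept positive so that its successor is Q (cycle_walk r t - 1).\<close>

definition cycle_walk :: "nat \<Rightarrow> nat \<Rightarrow> nat" where
  "cycle_walk r t = (r - 1) * t + r"

lemma backward_cycle_walk:
  assumes Q: "backward_chain Q" and r: "1 \<le> r" "Q r = Q 0"
  shows "1 \<le> cycle_walk r t" "Q (cycle_walk r 0) = Q 0"
    and "Q (cycle_walk r t - 1) = Q (cycle_walk r (Suc t))"
    and "step (Q (cycle_walk r t)) (Q (cycle_walk r (Suc t)))"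
proof -
  show walk_pos: "1 \<le> cycle_walk r t" and "Q (cycle_walk r 0) = Q 0"
    using r unfolding cycle_walk_def by simp_all
  have "cycle_walk r t - 1 + 1 * r = cycle_walk r (Suc t)"
    using r(1) unfolding cycle_walk_def by (simp add: algebra_simps)
  then show walk_Suc: "Q (cycle_walk r t - 1) = Q (cycle_walk r (Suc t))"
    using backward_chain_periodic[OF Q r(2), of "cycle_walk r t - 1" 1] by simp
  have "Suc (cycle_walk r t - 1) = cycle_walk r t"
    using walk_pos by simp
  then show "step (Q (cycle_walk r t)) (Q (cycle_walk r (Suc t)))"
    using Q walk_Suc unfolding backward_chain_def by metis
qed

fun itin_coords :: "nat \<Rightarrow> (nat \<Rightarrow> 3) \<Rightarrow> real set" where
  "itin_coords 0 c = {0..1}"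
| "itin_coords (Suc n) c =
    branch (c 1) (c 0) ` (itin_coords n (\<lambda>k. c (Suc k)) \<inter> {x. allowed (c 1) (c 0) x})"

lemma itin_coords_subset: "itin_coords n c \<subseteq> {0..1}"
proof (induction n arbitrary: c)
  case (Suc n)
  show ?case
  proof
    fix x assume "x \<in> itin_coords (Suc n) c"
    then obtain y where "y \<in> itin_coords n (\<lambda>k. c (Suc k))" "allowed (c 1) (c 0) y"
      "x = branch (c 1) (c 0) y"
      by auto
    then have "step (c 1, y) (c 0, x)"
      using Suc[of "\<lambda>k. c (Suc k)"] by (auto simp: step.simps)
    then show "x \<in> {0..1}"
      using step_target_nonvertex[OF \<open>step (c 1, y) (c 0, x)\<close>] by simp
  qed
qed simp

lemma compact_itin_coords: "compact (itin_coords n c)"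
proof (induction n arbitrary: c)
  case (Suc n)
  have "closed {x. allowed (c 1) (c 0) x}"
    unfolding allowed_def by (auto intro!: closed_Collect_disj closed_Collect_conj closed_Collect_le
        continuous_on_const continuous_on_id)
  then have "compact (itin_coords n (\<lambda>k. c (Suc k)) \<inter> {x. allowed (c 1) (c 0) x})"
    by (rule compact_Int_closed[OF Suc.IH])
  moreover have "continuous_on (itin_coords n (\<lambda>k. c (Suc k)) \<inter> {x. allowed (c 1) (c 0) x}) (branch (c 1) (c 0))"
    using itin_coords_subset by (intro continuous_on_subset[OF continuous_on_branch]) blast
  ultimately show ?case
    using compact_continuous_image by simp
qed simp

lemma itin_coords_iff:
  "x \<in> itin_coords n c \<longleftrightarrow>
    (\<exists>p. back_path n (c 0, x) p \<and> (\<forall>k\<le>n. fst (p k) = c k) \<and> 0 \<le> snd (p n) \<and> snd (p n) \<le> 1)"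
proof (induction n arbitrary: c x)
  case 0
  show ?case
    by (auto simp: back_path_def intro!: exI[of _ "\<lambda>_. (c 0, x)"])
next
  case (Suc n)
  show ?case
  proof
    assume "x \<in> itin_coords (Suc n) c"
    then obtain y where y: "y \<in> itin_coords n (\<lambda>k. c (Suc k))" "allowed (c 1) (c 0) y"
      "x = branch (c 1) (c 0) y"
      by auto
    obtain q where q: "back_path n (c 1, y) q" "\<forall>k\<le>n. fst (q k) = c (Suc k)"
      "0 \<le> snd (q n)" "snd (q n) \<le> 1"
      using Suc.IH[where c = "\<lambda>k. c (Suc k)" and x = y] y(1) by auto
    have "y \<in> {0..1}"
      using itin_coords_subset y(1) by blast
    then have "step (c 1, y) (c 0, x)"
      using y by (auto simp: step.simps)
    then have "back_path (Suc n) (c 0, x) (case_nat (c 0, x) q)"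
      using back_path_Cons q(1) by simp
    moreover have "\<forall>k\<le>Suc n. fst (case_nat (c 0, x) q k) = c k"
      using q(2) by (auto split: nat.split)
    ultimately show "\<exists>p. back_path (Suc n) (c 0, x) p \<and> (\<forall>k\<le>Suc n. fst (p k) = c k) \<and>
        0 \<le> snd (p (Suc n)) \<and> snd (p (Suc n)) \<le> 1"
      using q(3,4) by (intro exI[of _ "case_nat (c 0, x) q"]) simp
  next
    assume "\<exists>p. back_path (Suc n) (c 0, x) p \<and> (\<forall>k\<le>Suc n. fst (p k) = c k) \<and>
        0 \<le> snd (p (Suc n)) \<and> snd (p (Suc n)) \<le> 1"
    then obtain p where p: "back_path (Suc n) (c 0, x) p" "\<forall>k\<le>Suc n. fst (p k) = c k"
      "0 \<le> snd (p (Suc n))" "snd (p (Suc n)) \<le> 1"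
      by blast
    obtain y where y: "p 1 = (c 1, y)"
      using p(2) by (metis One_nat_def le_add1 plus_1_eq_Suc prod.collapse)
    have "step (c 1, y) (c 0, x)"
      using p(1) y unfolding back_path_def by (metis One_nat_def zero_less_Suc)
    then have "allowed (c 1) (c 0) y" "x = branch (c 1) (c 0) y"
      by (simp_all add: step.simps)
    moreover have "back_path n (c 1, y) (\<lambda>k. p (Suc k))"
      using p(1) y unfolding back_path_def by simp
    then have "y \<in> itin_coords n (\<lambda>k. c (Suc k))"
      using Suc.IH p(2-4) by auto
    ultimately show "x \<in> itin_coords (Suc n) c"
      by auto
  qed
qed

lemma itin_cell_eq:
  assumes N: "1 \<le> N" and c: "length c = N"
  shows "{s. has_back_path N s \<and> itin N s = c} =
    (\<Union>l. Pair (c ! 0) ` itin_coords N (\<lambda>k. if k < N then c ! k else l))"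
proof (intro equalityI subsetI)
  fix s assume "s \<in> {s. has_back_path N s \<and> itin N s = c}"
  then obtain p where p: "back_path N s p" "itin N s = c"
    unfolding has_back_path_def by blast
  obtain i x where s: "s = (i, x)"
    by (cases s)
  let ?c = "\<lambda>k. if k < N then c ! k else fst (p N)"
  have sides: "\<forall>k<N. fst (p k) = c ! k"
    using itin_nth[OF p(1)] p(2) by simp
  then have i: "i = c ! 0"
    using p(1) N s unfolding back_path_def by auto
  have "N - 1 < N" "Suc (N - 1) = N"
    using N by auto
  then have "step (p N) (p (N - 1))"
    using p(1) unfolding back_path_def by metis
  then have "0 \<le> snd (p N) \<and> snd (p N) \<le> 1"
    by (rule step_source_range)
  moreover have "\<forall>k\<le>N. fst (p k) = ?c k"
    using sides by (auto simp: le_less)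
  moreover have "back_path N (?c 0, x) p"
    using p(1) s i N by simp
  ultimately have "x \<in> itin_coords N ?c"
    unfolding itin_coords_iff by blast
  then show "s \<in> (\<Union>l. Pair (c ! 0) ` itin_coords N (\<lambda>k. if k < N then c ! k else l))"
    using s i by blast
next
  fix s assume "s \<in> (\<Union>l. Pair (c ! 0) ` itin_coords N (\<lambda>k. if k < N then c ! k else l))"
  then obtain l x where s: "s = (c ! 0, x)" "x \<in> itin_coords N (\<lambda>k. if k < N then c ! k else l)"
    by blast
  then obtain p where p: "back_path N s p" "\<forall>k<N. fst (p k) = c ! k"
    using N unfolding itin_coords_iff by auto
  have "map (\<lambda>k. fst (p k)) [0..<N] = c"
    using p(2) c by (intro nth_equalityI) simp_all
  then have "itin N s = c"
    using itin_eq[OF p(1)] by simp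
  then show "s \<in> {s. has_back_path N s \<and> itin N s = c}"
    using p(1) unfolding has_back_path_def by blast
qed

lemma closed_itin_cell:
  assumes "1 \<le> N" "length c = N"
  shows "closed (pt ` {s. has_back_path N s \<and> itin N s = c})"
proof -
  have "compact (pt ` Pair (c ! 0) ` itin_coords N (\<lambda>k. if k < N then c ! k else l))" for l
    unfolding image_image
    by (intro compact_continuous_image continuous_on_pt_side compact_itin_coords)
  then have "compact (\<Union>l. pt ` Pair (c ! 0) ` itin_coords N (\<lambda>k. if k < N then c ! k else l))"
    by (intro compact_UN) auto
  then show ?thesis
    unfolding itin_cell_eq[OF assms] image_UN by (rule compact_imp_closed)
qed

end

section \<open>The backward chain of the first decision point\<close>

text \<open>w is the backward chain of non-vertex preimages of the decision point of side 1.  The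
  last assumption is what the finiteness of the preimages of the other two decision points
  provides, see decision_chain_exists.\<close>

locale decision_chain = switching_system +
  fixes w :: "nat \<Rightarrow> side_point"
  assumes w_start: "w 0 = dp 1"
    and w_chain: "backward_chain w"
    and w_inj: "inj w"
    and dp_chains_repeat: "\<And>i Q. i \<noteq> 1 \<Longrightarrow> Q 0 = dp i \<Longrightarrow> backward_chain Q \<Longrightarrow> \<exists>a b. a < b \<and> Q a = Q b"
begin

abbreviation kneading :: "nat \<Rightarrow> 3 list" where
  "kneading N \<equiv> itin N (dp 1)"

lemma w_nonvertex: "nonvertex (w n)"
  using w_chain step_target_nonvertex unfolding backward_chain_def by blast

lemma back_path_w: "back_path N (w i) (\<lambda>k. w (i + k))"
  using backward_chain_back_path[OF w_chain] .

lemma has_back_path_w: "has_back_path N (w i)"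
  using back_path_w unfolding has_back_path_def by blast

lemma itin_eq_kneading_iff: "back_path N s p \<Longrightarrow> itin N s = kneading N \<longleftrightarrow> (\<forall>k<N. fst (p k) = fst (w k))"
  using itin_eq_iff[of N s p "dp 1" w] back_path_w[of N 0] w_start by simp

lemma itin_w_Suc: "itin N (w i) = take N (fst (w i) # itin N (w (Suc i)))"
  using itin_step[of "w (Suc i)" "w i" N] w_chain has_back_path_w unfolding backward_chain_def by simp

lemma kneading_head: "1 \<le> N \<Longrightarrow> kneading N ! 0 = 1"
  using itin_head[of N "dp 1"] has_back_path_w[of N 0] w_start by simp

lemma w_not_dp: "i \<noteq> 1 \<Longrightarrow> w n \<noteq> dp i"
proof
  assume "i \<noteq> 1" "w n = dp i"
  moreover have "backward_chain (\<lambda>k. w (n + k))"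
    using w_chain unfolding backward_chain_def by simp
  ultimately obtain a b where "a < b" "w (n + a) = w (n + b)"
    using dp_chains_repeat[of i "\<lambda>k. w (n + k)"] by auto
  then show False
    using w_inj unfolding inj_def by fastforce
qed

lemma kneading_not_periodic:
  assumes r: "1 \<le> r" and per: "\<forall>j. fst (w j) = fst (w (j + r))"
  shows False
proof -
  have "\<bar>snd (w 0) - snd (w r)\<bar> \<le> lip ^ B" for B
  proof -
    have "\<bar>snd (w 0) - snd (w r)\<bar> \<le> lip ^ B * \<bar>snd (w B) - snd (w (r + B))\<bar>"
      using back_path_contract[OF back_path_w[of B 0] back_path_w[of B r]] per
      by (simp add: add.commute)
    also have "\<dots> \<le> lip ^ B * 1"
      using w_nonvertex[of B] w_nonvertex[of "r + B"] lip_pos by (intro mult_left_mono) auto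
    finally show ?thesis by simp
  qed
  have "snd (w 0) = snd (w r)"
  proof (rule ccontr)
    assume "snd (w 0) \<noteq> snd (w r)"
    then obtain B where "lip ^ B < \<bar>snd (w 0) - snd (w r)\<bar>"
      using real_arch_pow_inv[OF _ lip_lt1, of "\<bar>snd (w 0) - snd (w r)\<bar>"] by auto
    then show False
      using \<open>\<And>B. \<bar>snd (w 0) - snd (w r)\<bar> \<le> lip ^ B\<close>[of B] by simp
  qed
  moreover have "fst (w 0) = fst (w r)"
    using per[rule_format, of 0] by simp
  ultimately have "w 0 = w r"
    by (simp add: prod_eq_iff)
  then show False
    using w_inj r unfolding inj_def by fastforce
qed

lemma kneading_no_bounded_shift: "\<not> (\<forall>B. \<exists>r\<in>{1..R}. \<forall>j\<le>B. fst (w j) = fst (w (j + r)))"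
  using bounded_shift_uniform[where f = "\<lambda>j. fst (w j)" and R = R] kneading_not_periodic
  by (metis atLeastAtMost_iff)

lemma kneading_no_periodic_windows:
  assumes r: "1 \<le> r"
    and windows: "\<And>B. \<exists>N s p. B + r < N \<and> back_path N s p \<and> itin N s = kneading N \<and>
      (\<forall>j. j + r < N \<longrightarrow> fst (p j) = fst (p (j + r)))"
  shows False
proof -
  have "\<forall>j\<le>B. fst (w j) = fst (w (j + r))" for B
  proof -
    obtain N s p where Nsp: "B + r < N" "back_path N s p" "itin N s = kneading N"
      "\<forall>j. j + r < N \<longrightarrow> fst (p j) = fst (p (j + r))"
      using windows by blast
    then have "\<forall>k<N. fst (p k) = fst (w k)"
      using itin_eq_kneading_iff by blast
    then show ?thesis
      using Nsp(1,4) by (metis add_le_mono1 le_less_trans add_lessD1)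
  qed
  then show False
    using kneading_no_bounded_shift[of r] r by auto
qed

lemma dp_back_paths_meet_decision:
  assumes "i \<noteq> 1"
  shows "\<exists>N0. \<forall>N\<ge>N0. \<forall>p. back_path N (dp i) p \<longrightarrow> (\<exists>k. 1 \<le> k \<and> k < N \<and> at_decision (p k))"
proof (cases "\<forall>N. has_back_path N (dp i)")
  case False
  then obtain N0 where "\<not> has_back_path N0 (dp i)" by blast
  then have "\<not> back_path N (dp i) p" if "N0 \<le> N" for N p
    using back_path_mono that unfolding has_back_path_def by blast
  then show ?thesis by blast
next
  case True
  then obtain Q where Q: "Q 0 = dp i" "backward_chain Q"
    using backward_chain_exists by blast
  then obtain a b where "a < b" "Q a = Q b"
    using dp_chains_repeat assms by blast
  moreover have "at_decision (Q 0)"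
    using Q(1) by simp
  ultimately obtain k where k: "1 \<le> k" "at_decision (Q k)"
    using backward_chain_repeat_decision[OF Q(2)] by blast
  show ?thesis
  proof (rule exI[of _ "Suc k"], intro allI impI)
    fix N p assume "Suc k \<le> N" "back_path N (dp i) p"
    then have "p k = Q k"
      using back_path_along_chain[OF Q(2), of N p k] Q(1) by simp
    then show "\<exists>k. 1 \<le> k \<and> k < N \<and> at_decision (p k)"
      using k \<open>Suc k \<le> N\<close> by (intro exI[of _ k]) simp
  qed
qed

definition decision_depth :: nat where
  "decision_depth = (SOME N0. \<forall>N\<ge>N0. \<forall>i p. i \<noteq> 1 \<longrightarrow> back_path N (dp i) p \<longrightarrow>
      (\<exists>k. 1 \<le> k \<and> k < N \<and> at_decision (p k)))"

lemma back_path_meets_decision: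
  assumes "decision_depth \<le> N" "i \<noteq> 1" "back_path N (dp i) p"
  shows "\<exists>k. 1 \<le> k \<and> k < N \<and> at_decision (p k)"
proof -
  obtain N2 N3 where N23:
    "\<forall>N\<ge>N2. \<forall>p. back_path N (dp 2) p \<longrightarrow> (\<exists>k. 1 \<le> k \<and> k < N \<and> at_decision (p k))"
    "\<forall>N\<ge>N3. \<forall>p. back_path N (dp 3) p \<longrightarrow> (\<exists>k. 1 \<le> k \<and> k < N \<and> at_decision (p k))"
    using dp_back_paths_meet_decision[of 2] dp_back_paths_meet_decision[of 3] by auto
  have "\<forall>N\<ge>max N2 N3. \<forall>i p. i \<noteq> 1 \<longrightarrow> back_path N (dp i) p \<longrightarrow>
      (\<exists>k. 1 \<le> k \<and> k < N \<and> at_decision (p k))"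
  proof (intro allI impI)
    fix N i p assume "max N2 N3 \<le> N" "i \<noteq> 1" "back_path N (dp i) p"
    then show "\<exists>k. 1 \<le> k \<and> k < N \<and> at_decision (p k)"
      using N23 exhaust_3_disj[of i] by (metis max.bounded_iff)
  qed
  then have "\<forall>N\<ge>decision_depth. \<forall>i p. i \<noteq> 1 \<longrightarrow> back_path N (dp i) p \<longrightarrow>
      (\<exists>k. 1 \<le> k \<and> k < N \<and> at_decision (p k))"
    unfolding decision_depth_def by (rule someI)
  then show ?thesis
    using assms by blast
qed

lemma not_at_decision:
  assumes "s \<noteq> dp 2" "s \<noteq> dp 3" "itin N s \<noteq> kneading N"
  shows "\<not> at_decision s"
  using assms exhaust_3_disj[of "fst s"] by (metis prod.collapse)

lemma w_not_at_decision: "itin N (w i) \<noteq> kneading N \<Longrightarrow> \<not> at_decision (w i)"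
  using not_at_decision w_not_dp by simp

lemma same_itin_same_successor_side:
  assumes N: "decision_depth \<le> N" "1 \<le> N"
    and paths: "has_back_path N s" "has_back_path N s'"
    and itins: "itin N s = itin N s'" "itin N s \<noteq> kneading N"
    and nd: "\<not> at_decision s" "\<not> at_decision s'"
    and t: "step s t" "step s' t'"
  shows "fst t = fst t'"
proof (rule ccontr)
  assume ne: "fst t \<noteq> fst t'"
  obtain p p' where p: "back_path N s p" and p': "back_path N s' p'"
    using paths unfolding has_back_path_def by blast
  have sides: "\<forall>k<N. fst (p k) = fst (p' k)"
    using itin_eq_iff[OF p p'] itins(1) by simp
  define i where "i = fst s"
  have i': "fst s' = i"
    using sides N(2) p p' unfolding i_def back_path_def by auto
  have opposite: "snd s < d i \<longleftrightarrow> \<not> snd s' < d i"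
    using ne step_successor_side[OF t(1) nd(1)] step_successor_side[OF t(2) nd(2)] i'
    unfolding i_def by (auto split: if_splits)
  have "min (snd s) (snd s') \<le> d i" "d i \<le> max (snd s) (snd s')"
    using opposite by (cases "snd s < d i"; simp add: min_def max_def)+
  moreover obtain N' where N': "N = Suc N'"
    using N(2) by (cases N) auto
  ultimately obtain P where P: "back_path N (dp i) P" "\<forall>k<N. fst (P k) = fst (p k)"
    using back_path_between[of N' s p s' p' "d i"] p p' sides unfolding i_def by auto
  have "itin N (dp i) = itin N s"
    using itin_eq_iff[OF P(1) p] P(2) by simp
  then have "i \<noteq> 1"
    using itins(2) by auto
  then obtain k where k: "1 \<le> k" "k < N" "at_decision (P k)"
    using back_path_meets_decision[OF N(1) _ P(1)] by blast
  moreover have "sgn (snd s' - d i) = - sgn (snd s - d i)" "sgn (snd s - d i) \<noteq> 0"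
    using opposite nd i' unfolding i_def by (cases "snd s < d i"; auto simp: sgn_if)+
  ultimately show False
    using straddling_back_paths_avoid_decisions[OF p p' P(1)] P(2) sides by auto
qed

lemma w_itin_not_backward_determined:
  assumes N: "1 \<le> N"
  shows "\<not> (\<forall>i. itin N (w i) = F (itin N (w (Suc i))))"
proof
  assume F: "\<forall>i. itin N (w i) = F (itin N (w (Suc i)))"
  define K where "K = card {c :: 3 list. length c = N}"
  have "\<exists>r\<in>{1..K}. \<forall>j\<le>B. itin N (w j) = itin N (w (j + r))" for B
    unfolding K_def
  proof (rule backward_determined_shift[where F = F])
    show "finite {c :: 3 list. length c = N}"
      using finite_lists_length_eq[of "UNIV :: 3 set" N] by simp
    show "itin N (w i) \<in> {c. length c = N}" for i
      using length_itin[OF has_back_path_w] by simp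
  qed (use F in blast)
  moreover have "fst (w j) = fst (w (j + r))" if "itin N (w j) = itin N (w (j + r))" for j r
    using that itin_head[OF has_back_path_w N, of j] itin_head[OF has_back_path_w N, of "j + r"]
    by simp
  ultimately have "\<forall>B. \<exists>r\<in>{1..K}. \<forall>j\<le>B. fst (w j) = fst (w (j + r))"
    by blast
  then show False
    using kneading_no_bounded_shift by blast
qed

lemma w_successor_side_determined:
  assumes N: "decision_depth \<le> N" "1 \<le> N"
    and after_kneading: "\<And>i. itin N (w (Suc i)) = kneading N \<Longrightarrow> fst (w i) = \<beta>"
  shows "\<exists>next_side. \<forall>i. fst (w i) = next_side (itin N (w (Suc i)))"
proof -
  define next_side where "next_side c =
    (if c = kneading N then \<beta> else (SOME j. \<exists>i. itin N (w (Suc i)) = c \<and> fst (w i) = j))" for c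
  have step_w: "step (w (Suc i)) (w i)" for i
    using w_chain unfolding backward_chain_def by blast
  have "fst (w i) = next_side (itin N (w (Suc i)))" for i
  proof (cases "itin N (w (Suc i)) = kneading N")
    case True
    then show ?thesis
      using after_kneading unfolding next_side_def by simp
  next
    case False
    obtain i' where i': "itin N (w (Suc i')) = itin N (w (Suc i))"
      "fst (w i') = next_side (itin N (w (Suc i)))"
      using someI_ex[of "\<lambda>j. \<exists>i'. itin N (w (Suc i')) = itin N (w (Suc i)) \<and> fst (w i') = j"] False
      unfolding next_side_def by auto
    have "\<not> at_decision (w (Suc i'))"
      using w_not_at_decision[of N "Suc i'"] False i'(1) by simp
    then have "fst (w i) = fst (w i')"
      using same_itin_same_successor_side[OF N has_back_path_w has_back_path_w i'(1)[symmetric] False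
          w_not_at_decision[OF False] _ step_w step_w] by blast
    then show ?thesis using i'(2) by simp
  qed
  then show ?thesis by blast
qed

lemma kneading_followed_by_both_sides:
  assumes N: "decision_depth \<le> N" "1 \<le> N" and \<beta>: "\<beta> = 2 \<or> \<beta> = 3"
  shows "\<exists>i. itin N (w (Suc i)) = kneading N \<and> fst (w i) = \<beta>"
proof (rule ccontr)
  assume H: "\<not> ?thesis"
  define \<beta>' :: 3 where "\<beta>' = (if \<beta> = 2 then 3 else 2)"
  have "fst (w i) = \<beta>'" if kneading: "itin N (w (Suc i)) = kneading N" for i
  proof -
    have "fst (w (Suc i)) = 1"
      using itin_head[OF has_back_path_w N(2)] kneading_head[OF N(2)] kneading by metis
    moreover have "step (w (Suc i)) (w i)"
      using w_chain unfolding backward_chain_def by blast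
    ultimately have "fst (w i) = 1 + 1 \<or> fst (w i) = 1 + 2"
      using step_side[of "w (Suc i)" "w i"] by auto
    then have "fst (w i) = 2 \<or> fst (w i) = 3"
      by simp
    moreover have "fst (w i) \<noteq> \<beta>"
      using H kneading by blast
    ultimately show ?thesis
      using \<beta> unfolding \<beta>'_def by auto
  qed
  then obtain next_side where next_side: "\<forall>i. fst (w i) = next_side (itin N (w (Suc i)))"
    using w_successor_side_determined[OF N] by blast
  have "\<forall>i. itin N (w i) = (\<lambda>c. take N (next_side c # c)) (itin N (w (Suc i)))"
  proof
    fix i show "itin N (w i) = (\<lambda>c. take N (next_side c # c)) (itin N (w (Suc i)))"
      using itin_w_Suc[of N i] next_side[rule_format, of i] by simp
  qed
  then show False
    using w_itin_not_backward_determined[OF N(2), of "\<lambda>c. take N (next_side c # c)"] by blast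
qed

lemma forward_reaches_kneading:
  assumes N: "decision_depth \<le> N" "1 \<le> N"
    and \<zeta>: "forward_chain \<zeta>" "\<And>t. has_back_path N (\<zeta> t)" "\<And>t. \<zeta> t \<noteq> dp 2 \<and> \<zeta> t \<noteq> dp 3"
    and eq: "itin N (\<zeta> n) = itin N (w i)"
  shows "\<exists>t\<le>i. itin N (\<zeta> (n + t)) = kneading N"
proof (rule ccontr)
  assume H: "\<not> ?thesis"
  have step_\<zeta>: "step (\<zeta> (n + t)) (\<zeta> (n + Suc t))" for t
    using \<zeta>(1) unfolding forward_chain_def by simp
  have step_w: "step (w (i - t)) (w (i - Suc t))" if "t < i" for t
  proof -
    have "Suc (i - Suc t) = i - t" using that by simp
    then show ?thesis
      using w_chain unfolding backward_chain_def by metis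
  qed
  have follow: "fst (\<zeta> (n + Suc t)) = fst (w (i - Suc t))"
    if t: "t < i" and eq_t: "itin N (\<zeta> (n + t)) = itin N (w (i - t))" for t
  proof -
    have nk: "itin N (\<zeta> (n + t)) \<noteq> kneading N"
      using H t by auto
    moreover have "\<not> at_decision (\<zeta> (n + t))"
      using not_at_decision \<zeta>(3) nk by blast
    moreover have "\<not> at_decision (w (i - t))"
      using w_not_at_decision[of N "i - t"] nk eq_t by simp
    ultimately show ?thesis
      using same_itin_same_successor_side[OF N \<zeta>(2) has_back_path_w eq_t nk _ _ step_\<zeta> step_w[OF t]]
      by blast
  qed
  have "itin N (\<zeta> (n + i)) = itin N (w (i - i))"
    using itin_tracking[where x = "\<lambda>t. \<zeta> (n + t)" and y = "\<lambda>t. w (i - t)" and T = i and N = N]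
      step_\<zeta> step_w \<zeta>(2) has_back_path_w follow eq by simp
  then show False
    using H w_start by auto
qed

lemma kneading_recurs:
  assumes N: "decision_depth \<le> N" "1 \<le> N"
    and \<zeta>: "forward_chain \<zeta>" "\<And>t. has_back_path N (\<zeta> t)" "\<And>t. \<zeta> t \<noteq> dp 2 \<and> \<zeta> t \<noteq> dp 3"
    and visit: "itin N (\<zeta> n) = kneading N"
  shows "\<exists>n'>n. itin N (\<zeta> n') = kneading N"
proof -
  have step_n: "step (\<zeta> n) (\<zeta> (Suc n))"
    using \<zeta>(1) unfolding forward_chain_def by simp
  have "itin N (\<zeta> n) ! 0 = fst (\<zeta> n)"
    by (rule itin_head[OF \<zeta>(2) N(2)])
  then have "fst (\<zeta> n) = 1"
    using kneading_head[OF N(2)] visit by simp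
  then have "fst (\<zeta> (Suc n)) = 2 \<or> fst (\<zeta> (Suc n)) = 3"
    using step_side[OF step_n] by auto
  then obtain i where i: "itin N (w (Suc i)) = kneading N" "fst (w i) = fst (\<zeta> (Suc n))"
    using kneading_followed_by_both_sides[OF N] by blast
  have "itin N (\<zeta> (Suc n)) = itin N (w i)"
    using itin_step[OF step_n \<zeta>(2)] itin_w_Suc[of N i] visit i by simp
  then obtain t where "itin N (\<zeta> (Suc n + t)) = kneading N"
    using forward_reaches_kneading[OF N \<zeta>] by blast
  then show ?thesis
    by (intro exI[of _ "Suc n + t"]) simp
qed

lemma cycle_avoids_kneading:
  assumes Q: "backward_chain Q" and r: "1 \<le> r" "Q r = Q 0"
  shows "\<exists>N1. \<forall>N\<ge>N1. \<forall>k. itin N (Q k) \<noteq> kneading N"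
proof (rule ccontr)
  assume "\<not> ?thesis"
  then have visits: "\<exists>N\<ge>N1. \<exists>k. itin N (Q k) = kneading N" for N1
    by blast
  show False
  proof (rule kneading_no_periodic_windows[OF r(1)])
    fix B
    obtain N k where "Suc (B + r) \<le> N" "itin N (Q k) = kneading N"
      using visits by blast
    moreover have "fst (Q (k + j)) = fst (Q (k + j + r))" for j
      using backward_chain_periodic[OF Q r(2), of "k + j" 1] by simp
    ultimately show "\<exists>N s p. B + r < N \<and> back_path N s p \<and> itin N s = kneading N \<and>
        (\<forall>j. j + r < N \<longrightarrow> fst (p j) = fst (p (j + r)))"
      using backward_chain_back_path[OF Q, of N k] by (intro exI[of _ N] exI[of _ "Q k"]) (auto simp: add.assoc)
  qed
qed

lemma cycle_decision_successor_side:
  assumes Q: "backward_chain Q" and r: "1 \<le> r" "Q r = Q 0"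
    and K: "1 \<le> K" "at_decision (Q K)"
    and y: "has_back_path N y" "itin N y = itin N (Q K)" "y \<noteq> Q K" and N: "2 * r < N"
    and t: "step y t"
  shows "fst t = fst (Q (K - 1))"
proof -
  obtain p where p: "back_path N y p"
    using y(1) unfolding has_back_path_def by blast
  have q: "back_path N (Q K) (\<lambda>j. Q (K + j))"
    using backward_chain_back_path[OF Q] .
  have sides: "\<forall>j<N. fst (p j) = fst (Q (K + j))"
    using itin_eq_iff[OF p q] y(2) by simp
  define c where "c = fst (Q K)"
  have fy: "fst y = c"
    using sides N p unfolding back_path_def c_def by auto
  have "snd y \<noteq> d c"
    using y(3) K(2) fy unfolding c_def by (auto simp: prod_eq_iff)
  then have nd: "\<not> at_decision y"
    using fy by simp
  have Q2r: "Q (K + 2 * r) = Q K" "Q (K + 2 * r - 1) = Q (K - 1)"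
    using backward_chain_periodic[OF Q r(2), of K 2] backward_chain_periodic[OF Q r(2), of "K - 1" 2] K(1)
    by (simp_all add: algebra_simps)
  have "sgn (snd (p (0 + 2 * r)) - snd (Q (K + (0 + 2 * r)))) = sgn (snd (p 0) - snd (Q (K + 0)))"
    using back_path_sgn_even_shift[OF p q sides, of 0 r] N by simp
  then have half: "sgn (snd y - d c) = sgn (snd (p (2 * r)) - d c)"
    using Q2r K(2) p unfolding c_def back_path_def by simp
  have "Suc (2 * r - 1) = 2 * r" "2 * r - 1 < N"
    using r N by auto
  then have step2: "step (p (2 * r)) (p (2 * r - 1))"
    using p unfolding back_path_def by metis
  have "fst (p (2 * r)) = c" "fst (p (2 * r - 1)) = fst (Q (K - 1))"
    using sides[rule_format, of "2 * r"] sides[rule_format, of "2 * r - 1"] N Q2r r K(1)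
    unfolding c_def by (simp_all add: algebra_simps)
  moreover have "fst t = fst (p (2 * r - 1))"
    using same_half_same_successor_side[OF t step2 _ nd] half fy calculation(1) by simp
  ultimately show ?thesis by simp
qed

lemma w_follows_cycle:
  assumes Q: "backward_chain Q" and r: "1 \<le> r" "Q r = Q 0"
    and N: "decision_depth \<le> N" "2 * r < N" and K: "1 \<le> K"
    and eq: "itin N (w (Suc j)) = itin N (Q K)" and nk: "itin N (Q K) \<noteq> kneading N"
  shows "fst (w j) = fst (Q (K - 1))"
proof -
  have step_w: "step (w (Suc j)) (w j)"
    using w_chain unfolding backward_chain_def by blast
  have nd_w: "\<not> at_decision (w (Suc j))"
    using w_not_at_decision[of N "Suc j"] eq nk by simp
  show ?thesis
  proof (cases "at_decision (Q K)")
    case True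
    then have "w (Suc j) \<noteq> Q K"
      using nd_w by auto
    then show ?thesis
      by (rule cycle_decision_successor_side[OF Q r K True has_back_path_w eq _ N(2) step_w])
  next
    case False
    have "Suc (K - 1) = K"
      using K by simp
    then have "step (Q K) (Q (K - 1))"
      using Q unfolding backward_chain_def by metis
    moreover have "has_back_path N (Q K)"
      using backward_chain_back_path[OF Q] unfolding has_back_path_def by blast
    moreover have "1 \<le> N" "itin N (w (Suc j)) \<noteq> kneading N"
      using N(2) eq nk by simp_all
    ultimately show ?thesis
      using same_itin_same_successor_side[OF N(1) _ has_back_path_w _ eq _ nd_w False step_w] by blast
  qed
qed

lemma backward_chain_from_w_inj:
  assumes Q: "backward_chain Q" "Q 0 = w n"
  shows "inj Q"
proof -
  have Qw: "Q j = w (n + j)" for j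
    using back_path_along_chain[OF Q(1), of j "\<lambda>k. w (n + k)" j] back_path_w[of j n] Q(2) by simp
  show ?thesis
  proof (rule injI)
    fix x y assume "Q x = Q y"
    then have "w (n + x) = w (n + y)"
      using Qw by simp
    then have "n + x = n + y"
      by (rule injD[OF w_inj])
    then show "x = y" by simp
  qed
qed

definition chain_limit :: "side_point \<Rightarrow> bool" where
  "chain_limit s \<longleftrightarrow> (\<forall>N. has_back_path N s \<and> (\<exists>n. itin N (w n) = itin N s))"

lemma chain_limit_not_on_cycle:
  assumes s: "chain_limit s" and Q: "backward_chain Q" "Q 0 = s" and r: "1 \<le> r" "Q r = Q 0"
  shows False
proof -
  obtain N1 where N1: "\<forall>N\<ge>N1. \<forall>k. itin N (Q k) \<noteq> kneading N"
    using cycle_avoids_kneading[OF Q(1) r] by blast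
  define N where "N = max (max decision_depth N1) (Suc (2 * r))"
  have N: "decision_depth \<le> N" "N1 \<le> N" "2 * r < N"
    unfolding N_def by auto
  obtain n where n: "itin N (w n) = itin N s" "has_back_path N s"
    using s unfolding chain_limit_def by blast
  note walk = backward_cycle_walk[OF Q(1) r]
  have step_w: "step (w (n - t)) (w (n - Suc t))" if "t < n" for t
  proof -
    have "Suc (n - Suc t) = n - t" using that by simp
    then show ?thesis
      using w_chain unfolding backward_chain_def by metis
  qed
  have follow: "fst (w (n - Suc t)) = fst (Q (cycle_walk r (Suc t)))"
    if t: "t < n" and eq: "itin N (w (n - t)) = itin N (Q (cycle_walk r t))" for t
  proof -
    have "Suc (n - Suc t) = n - t"
      using t by simp
    then show ?thesis
      using w_follows_cycle[OF Q(1) r N(1,3) walk(1), of "n - Suc t"] eq N1 N(2) walk(3) by simp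
  qed
  have "has_back_path N (Q k)" for k
    using backward_chain_back_path[OF Q(1)] unfolding has_back_path_def by blast
  then have "itin N (w (n - n)) = itin N (Q (cycle_walk r n))"
    using itin_tracking[where x = "\<lambda>t. w (n - t)" and y = "\<lambda>t. Q (cycle_walk r t)" and T = n and N = N]
      step_w walk(4) has_back_path_w follow n walk(2) Q(2) by simp
  then have "itin N (Q (cycle_walk r n)) = kneading N"
    using w_start by simp
  then show False
    using N1 N(2) by blast
qed

lemma chain_limit_no_merge:
  assumes s: "chain_limit s" and Q: "backward_chain Q" "Q 0 = s"
    and ab: "0 < a" "a < b" "Q a = Q b" "Q (a - 1) \<noteq> Q (b - 1)"
  shows False
proof -
  define m where "m = b - a"
  define N where "N = Suc (a + 2 * m)"
  note merge = backward_chain_merge[OF Q(1) ab, folded m_def]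
  obtain n where n: "itin N (w n) = itin N s"
    using s unfolding chain_limit_def by blast
  have "w n \<noteq> s"
  proof
    assume "w n = s"
    then have "inj Q"
      using backward_chain_from_w_inj[OF Q(1), of n] Q(2) by simp
    then show False
      using injD[OF \<open>inj Q\<close> ab(3)] ab(2) by simp
  qed
  moreover have Qp: "back_path N s Q"
    using backward_chain_back_path[OF Q(1), of N 0] Q(2) by simp
  then have sides: "\<forall>j<N. fst (w (n + j)) = fst (Q j)"
    using itin_eq_iff[OF back_path_w] n by simp
  ultimately have "sgn (snd (w n) - snd s) \<noteq> 0"
    using Q(2) unfolding N_def by (auto simp: prod_eq_iff sgn_if)
  then have "sgn (snd (w (n + a)) - snd (Q a)) \<noteq> 0"
    using back_path_sgn[OF back_path_w Qp sides, of a] unfolding N_def by simp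
  moreover have "sgn (snd (w (n + (a + 2 * m))) - snd (Q (a + 2 * m))) = sgn (snd (w (n + a)) - snd (Q a))"
    using back_path_sgn_even_shift[OF back_path_w Qp sides] unfolding N_def by simp
  ultimately have half: "sgn (snd (w (n + a)) - d (fst (w (n + a)))) =
      sgn (snd (w (n + (a + 2 * m))) - d (fst (w (n + a))))" "\<not> at_decision (w (n + a))"
    using sides merge unfolding N_def by (auto simp: sgn_if)
  have "Suc (n + a - 1) = n + a" "Suc (n + (a + 2 * m) - 1) = n + (a + 2 * m)"
    using ab(1) by auto
  then have "step (w (n + a)) (w (n + a - 1))" "step (w (n + (a + 2 * m))) (w (n + (a + 2 * m) - 1))"
    using w_chain unfolding backward_chain_def by metis+
  moreover have "fst (w (n + a)) = fst (w (n + (a + 2 * m)))"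
    using sides merge(3) unfolding N_def by simp
  ultimately have "fst (w (n + a - 1)) = fst (w (n + (a + 2 * m) - 1))"
    using same_half_same_successor_side half by blast
  moreover have "fst (w (n + a - 1)) = fst (Q (a - 1))" "fst (w (n + (a + 2 * m) - 1)) = fst (Q (b - 1))"
    using sides[rule_format, of "a - 1"] sides[rule_format, of "a + 2 * m - 1"] merge(4) ab(1)
    unfolding N_def by simp_all
  ultimately show False
    using merge(2) by simp
qed

lemma chain_limit_backward_chain_inj:
  assumes s: "chain_limit s" and Q: "backward_chain Q" "Q 0 = s"
  shows "inj Q"
proof (rule injI, rule ccontr)
  fix a b assume "Q a = Q b" "a \<noteq> b"
  then obtain a b where "a < b" "Q a = Q b"
    by (metis linorder_neqE_nat)
  from backward_chain_returns_or_merges[OF Q(1) this] show False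
    using chain_limit_not_on_cycle[OF s Q] chain_limit_no_merge[OF s Q] by blast
qed

lemma chain_limit_orbit_avoids_dp:
  assumes s: "chain_limit s" and \<zeta>: "forward_chain \<zeta>" "\<zeta> 0 = s" and i: "i \<noteq> 1"
  shows "\<zeta> n \<noteq> dp i"
proof
  assume \<zeta>n: "\<zeta> n = dp i"
  have "\<forall>N. has_back_path N (\<zeta> 0)"
    using s \<zeta>(2) unfolding chain_limit_def by simp
  then have "\<forall>N. has_back_path N (\<zeta> n)"
    using forward_chain_has_back_path[OF _ \<zeta>(1)] by simp
  then obtain Q where Q: "Q 0 = \<zeta> n" "backward_chain Q"
    using backward_chain_exists by blast
  obtain a b where ab: "a < b" "Q a = Q b"
    using dp_chains_repeat[OF i Q(1)[unfolded \<zeta>n] Q(2)] by blast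
  have "back_path n (\<zeta> n) (\<lambda>t. \<zeta> (n - t))"
    using forward_chain_back_path[OF \<zeta>(1)] by simp
  then have "\<zeta> (n - n) = Q n"
    using back_path_along_chain[OF Q(2), of n "\<lambda>t. \<zeta> (n - t)" n] Q(1) by simp
  then have "Q n = s"
    using \<zeta>(2) by simp
  moreover have "backward_chain (\<lambda>j. Q (n + j))"
    using Q(2) unfolding backward_chain_def by simp
  ultimately have "inj (\<lambda>j. Q (n + j))"
    using chain_limit_backward_chain_inj[OF s, of "\<lambda>j. Q (n + j)"] by simp
  moreover have "Q (n + a) = Q (n + b)"
    using backward_chain_shift_eq[OF Q(2) ab(2), of n] by (simp add: add.commute)
  ultimately have "a = b"
    by (rule injD)
  then show False
    using ab(1) by simp
qed

lemma chain_limit_orbit_visits_kneading: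
  assumes s: "chain_limit s" and \<zeta>: "forward_chain \<zeta>" "\<zeta> 0 = s"
    and N: "decision_depth \<le> N" "1 \<le> N"
  shows "\<exists>n\<ge>n0. itin N (\<zeta> n) = kneading N"
proof -
  have paths: "has_back_path N (\<zeta> t)" for t
    using forward_chain_has_back_path[OF _ \<zeta>(1)] s \<zeta>(2) unfolding chain_limit_def by simp
  have avoid: "\<zeta> t \<noteq> dp 2 \<and> \<zeta> t \<noteq> dp 3" for t
    using chain_limit_orbit_avoids_dp[OF s \<zeta>] by simp
  show ?thesis
  proof (induction n0)
    case 0
    obtain i where "itin N (\<zeta> 0) = itin N (w i)"
      using s \<zeta>(2) unfolding chain_limit_def by metis
    then show ?case
      using forward_reaches_kneading[OF N \<zeta>(1) paths avoid, of 0 i] by auto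
  next
    case (Suc n0)
    then obtain n where n: "n0 \<le> n" "itin N (\<zeta> n) = kneading N" by blast
    moreover obtain n' where "n < n'" "itin N (\<zeta> n') = kneading N"
      using kneading_recurs[OF N \<zeta>(1) paths avoid n(2)] by blast
    ultimately show ?case
      by (intro exI[of _ n']) auto
  qed
qed

lemma chain_limit_sides_not_eventually_periodic:
  assumes s: "chain_limit s" and \<zeta>: "forward_chain \<zeta>" "\<zeta> 0 = s" and m: "1 \<le> m"
    and per: "\<forall>n\<ge>M. fst (\<zeta> (n + m)) = fst (\<zeta> n)"
  shows False
proof (rule kneading_no_periodic_windows[OF m])
  fix B
  define N where "N = max decision_depth (Suc (B + m))"
  have N: "decision_depth \<le> N" "1 \<le> N" "B + m < N"
    unfolding N_def by auto
  obtain n where n: "M + N \<le> n" "itin N (\<zeta> n) = kneading N"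
    using chain_limit_orbit_visits_kneading[OF s \<zeta> N(1,2)] by blast
  have "back_path N (\<zeta> n) (\<lambda>k. \<zeta> (n - k))"
    using forward_chain_back_path[OF \<zeta>(1)] n(1) by simp
  moreover have "fst (\<zeta> (n - j)) = fst (\<zeta> (n - (j + m)))" if "j + m < N" for j
  proof -
    have "M \<le> n - (j + m)" "n - (j + m) + m = n - j"
      using that n(1) by simp_all
    then show ?thesis using per by metis
  qed
  ultimately show "\<exists>N s p. B + m < N \<and> back_path N s p \<and> itin N s = kneading N \<and>
      (\<forall>j. j + m < N \<longrightarrow> fst (p j) = fst (p (j + m)))"
    using N(3) n(2) by blast
qed

lemma closure_chain_itin:
  assumes u: "u \<in> closure (pt ` range w)" and N: "1 \<le> N"
  shows "\<exists>s n. has_back_path N s \<and> pt s = u \<and> itin N (w n) = itin N s"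
proof -
  define T where "T = (\<Union>c\<in>range (\<lambda>n. itin N (w n)). pt ` {s. has_back_path N s \<and> itin N s = c})"
  have "range (\<lambda>n. itin N (w n)) \<subseteq> {c. length c = N}"
    using length_itin[OF has_back_path_w] by auto
  then have "finite (range (\<lambda>n. itin N (w n)))"
    using finite_lists_length_eq[of "UNIV :: 3 set" N] by (simp add: finite_subset)
  then have "closed T"
    unfolding T_def
    by (rule closed_UN) (use closed_itin_cell[OF N] length_itin[OF has_back_path_w] in auto)
  moreover have "pt ` range w \<subseteq> T"
    unfolding T_def using has_back_path_w by blast
  ultimately have "u \<in> T"
    using u closure_minimal by blast
  then obtain n s where "has_back_path N s" "itin N s = itin N (w n)" "u = pt s"
    unfolding T_def by blast
  then show ?thesis
    by metis
qed

lemma closure_chain_limit: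
  assumes u: "u \<in> closure (pt ` range w)"
  shows "\<exists>s. nonvertex s \<and> pt s = u \<and> chain_limit s"
proof -
  have nonvertex: "nonvertex s" if "has_back_path N s" "1 \<le> N" for N s
    using that back_path_nonvertex unfolding has_back_path_def by (metis back_path_def less_le_trans zero_less_one)
  obtain s where s: "has_back_path 1 s" "pt s = u"
    using closure_chain_itin[OF u, of 1] by auto
  have "has_back_path N s \<and> (\<exists>n. itin N (w n) = itin N s)" for N
  proof (cases "N = 0")
    case True
    have path: "back_path 0 s' (\<lambda>_. s')" for s'
      by (simp add: back_path_def)
    then have "itin 0 s' = []" for s'
      using itin_eq[OF path[of s']] by simp
    then have "has_back_path 0 s" "itin 0 (w 0) = itin 0 s"
      using path[of s] unfolding has_back_path_def by auto
    then show ?thesis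
      using True by blast
  next
    case False
    then obtain s' n where s': "has_back_path N s'" "pt s' = u" "itin N (w n) = itin N s'"
      using closure_chain_itin[OF u, of N] by auto
    then have "s' = s"
      using pt_inj[of s' s] nonvertex[OF s'(1)] nonvertex[OF s(1)] s(2) False by simp
    then show ?thesis
      using s' by blast
  qed
  then have "chain_limit s"
    unfolding chain_limit_def by blast
  then show ?thesis
    using s nonvertex[OF s(1)] by blast
qed

lemma closure_trajectory_not_eventually_periodic:
  assumes u: "u \<in> closure (pt ` range w)" and z: "trajectory \<rho> d z" "z 0 = u"
  shows "\<not> eventually_periodic z"
proof
  assume "eventually_periodic z"
  then obtain m M where m: "1 \<le> m" "\<forall>n\<ge>M. Sides (z (n + m)) = Sides (z n)"
    unfolding eventually_periodic_def by blast
  obtain s where s: "nonvertex s" "pt s = u" "chain_limit s"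
    using closure_chain_limit[OF u] by blast
  obtain \<zeta> where \<zeta>: "forward_chain \<zeta>" "\<And>n. z n = pt (\<zeta> n)"
    using trajectory_lift[OF z(1)] by blast
  have "\<zeta> 0 = s"
    using pt_inj[OF s(1), of "\<zeta> 0"] step_source_range[of "\<zeta> 0" "\<zeta> 1"] \<zeta> z(2) s(2)
    unfolding forward_chain_def by simp
  moreover have "nonvertex (\<zeta> n)" for n
  proof (cases n)
    case (Suc k)
    then show ?thesis
      using \<zeta>(1) step_target_nonvertex unfolding forward_chain_def by blast
  qed (use s(1) \<open>\<zeta> 0 = s\<close> in simp)
  then have "Sides (z n) = {fst (\<zeta> n)}" for n
    using Sides_pt \<zeta>(2) by simp
  then have "\<forall>n\<ge>M. fst (\<zeta> (n + m)) = fst (\<zeta> n)"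
    using m(2) by simp
  ultimately show False
    using chain_limit_sides_not_eventually_periodic[OF s(3) \<zeta>(1) _ m(1)] by blast
qed

end

context switching_system
begin

lemma decision_chain_exists:
  assumes inf: "infinite (preimages \<rho> d (pt (dp 1)))"
    and fin: "\<And>i. i \<noteq> 1 \<Longrightarrow> finite (preimages \<rho> d (pt (dp i)))"
  shows "\<exists>w. decision_chain \<rho> d w \<and> P1 \<rho> d \<subseteq> pt ` range w"
proof -
  have "nonvertex (dp 1)"
    using d_pos d_lt1 by simp
  then obtain w where w: "w 0 = dp 1" "backward_chain w"
    using backward_chain_exists infinite_preimages_has_back_path[OF _ inf] by blast
  have "decision_chain \<rho> d w"
  proof (unfold_locales)
    show "inj w"
      using backward_chain_infinite_preimages_inj[OF w(2)] w(1) inf by simp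
    show "\<exists>a b. a < b \<and> Q a = Q b" if "i \<noteq> 1" "Q 0 = dp i" "backward_chain Q" for i Q
      using backward_chain_finite_preimages_repeats[OF that(3)] fin[OF that(1)] that(2) by simp
  qed (use w in auto)
  moreover have "spt (d 1) 1 = pt (w 0)"
    using w(1) by (simp add: pt_def)
  then have "P1 \<rho> d \<subseteq> pt ` range w"
    unfolding P1_def using preimages_backward_chain[OF w(2)] by auto
  ultimately show ?thesis by blast
qed

end

theorem lemma5p3:
  fixes \<rho> d :: "3 \<Rightarrow> real" and u :: "real^3"
  assumes rho_range: "\<forall>i. 0 < \<rho> i \<and> \<rho> i < 1"
    and rho_sum: "\<rho> 1 + \<rho> 2 + \<rho> 3 > 1"
    and rho_pair: "\<forall>i j. i \<noteq> j \<longrightarrow> \<rho> i + \<rho> j \<le> 1"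
    and d_range: "\<forall>i. 0 < d i \<and> d i < 1"
    and inf1: "infinite (preimages \<rho> d (spt (d 1) 1))"
    and fin2: "finite (preimages \<rho> d (spt (d 2) 2))"
    and fin3: "finite (preimages \<rho> d (spt (d 3) 3))"
    and u_in: "u \<in> closure (P1 \<rho> d)"
  shows "\<not> in_periodic_orbit \<rho> d u \<and>
         (\<forall>z. trajectory \<rho> d z \<and> z 0 = u \<longrightarrow> \<not> eventually_periodic z)"
proof -
  interpret switching_system \<rho> d
    using rho_range rho_sum rho_pair d_range by unfold_locales
  have "finite (preimages \<rho> d (pt (dp i)))" if "i \<noteq> 1" for i
    using fin2 fin3 that exhaust_3_disj[of i] by (auto simp: pt_def)
  then obtain w where w: "decision_chain \<rho> d w" "P1 \<rho> d \<subseteq> pt ` range w"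
    using decision_chain_exists inf1 by (auto simp: pt_def)
  interpret decision_chain \<rho> d w
    by (rule w(1))
  have u: "u \<in> closure (pt ` range w)"
    using closure_mono[OF w(2)] u_in by blast
  then have "\<forall>z. trajectory \<rho> d z \<and> z 0 = u \<longrightarrow> \<not> eventually_periodic z"
    using closure_trajectory_not_eventually_periodic by blast
  then show ?thesis
    using periodic_orbit_trajectory by blast
qed

end
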